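(* Let $\Gamma$ be isotropic or co-isotropic, $m\ge2$, and $\mathcal{O}_{m-1}$ as in the context (at any point $p=\gamma(t)\in\Gamma$). Then $$\sqrt{\det\mathcal{O}_{m-1}}=\begin{cases}m^{d/2}&\text{if }\Gamma\text{ is isotropic},\\ 2^{(d-n)(m-1)}\,m^{n-\frac d2}&\text{if }\Gamma\text{ is co-isotropic}.\end{cases}$$ Equivalently, $2^{\frac{d(m-1)}{2}}(\det\mathcal{O}_{m-1})^{-1/2}=2^{\frac{d'(m-1)}{2}}m^{-\frac{d'}{2}}$, where $d'=d$ if $\Gamma$ is isotropic and $d'=2n-d$ if co-isotropic.
   Context: $\mathbb{B}_n=\{z\in\mathbb{C}^n:|z|<1\}$ with the Riemannian metric $\mathring b$ induced by the Bergman Hermitian metric $b_{jk}(p)=\frac{1}{n+1}\frac{\partial^2}{\partial z_j\partial\bar z_k}\log(1-|z|^2)^{-(n+1)}|_{z=p}$; $J$ is the standard complex structure, $\omega_p(\xi,\nu)=\mathring b_p(\xi,J\nu)$. $\Gamma\subseteq\mathbb{B}_n$ is an embedded submanifold of dimension $d$ with inclusion $\iota$; it is isotropic (resp. co-isotropic) if for each $p$ the subspace $V=D_p\iota(T_p\Gamma)$ satisfies $V\subseteq V^\omega$ (resp. $V^\omega\subseteq V$), where $V^\omega=\{\xi:\omega_p(\xi,v)=0\ \forall v\in V\}$. For a parametrization $\gamma:B(0,1)\subset\mathbb{R}^d\to\Gamma$ with $p=\gamma(t)$, let $G=(g_{jk}(p))$, $g_{jk}(p)=\mathring b_p(D_p\iota\,\partial_{t_j},D_p\iota\,\partial_{t_k})$,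 $H=(h_{jk}(p))$, $h_{jk}(p)=\omega_p(D_p\iota\,\partial_{t_j},D_p\iota\,\partial_{t_k})$, and $W=G^{-1}H$. $\mathcal{O}_{m-1}$ is the $(m-1)d\times(m-1)d$ matrix which, as an $(m-1)\times(m-1)$ block matrix with $d\times d$ blocks, is block tridiagonal with diagonal blocks $2I$, superdiagonal blocks $-I-iW$, subdiagonal blocks $-I+iW$, and all other blocks zero. The square root is the positive one. *)

theory Defs
  imports "HOL-Analysis.Analysis" "Jordan_Normal_Form.Determinant"
    "Jordan_Normal_Form.Gauss_Jordan_Elimination"
begin

text \<open>Points of C^n are vectors of type complex^'n, n = CARD('n).
  The Bergman Hermitian metric b_jk(p) = 1/(n+1) d_j dbar_k log (1-|z|^2)^(-(n+1)) at p,
  written out explicitly: b_jk(p) = delta_jk/(1-|p|^2) + conj(p_j) p_k/(1-|p|^2)^2.\<close>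

definition bergman_herm :: "complex^'n \<Rightarrow> 'n \<Rightarrow> 'n \<Rightarrow> complex" where
  "bergman_herm p j k =
     (if j = k then 1 / complex_of_real (1 - (norm p)^2) else 0)
     + cnj (p $ j) * p $ k / complex_of_real ((1 - (norm p)^2)^2)"

definition bergman_riem :: "complex^'n \<Rightarrow> complex^'n \<Rightarrow> complex^'n \<Rightarrow> real" where
  "bergman_riem p xi nu = Re (\<Sum>j\<in>UNIV. \<Sum>k\<in>UNIV. bergman_herm p j k * xi $ j * cnj (nu $ k))"

definition Jcx :: "complex^'n \<Rightarrow> complex^'n" where
  "Jcx v = (\<chi> j. \<i> * v $ j)"

definition omega :: "complex^'n \<Rightarrow> complex^'n \<Rightarrow> complex^'n \<Rightarrow> real" where
  "omega p xi nu = bergman_riem p xi (Jcx nu)"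

definition sympl_compl :: "complex^'n \<Rightarrow> (complex^'n) set \<Rightarrow> (complex^'n) set" where
  "sympl_compl p V = {xi. \<forall>v\<in>V. omega p xi v = 0}"

definition local_param :: "(complex^'n) set \<Rightarrow> (complex^'n) set \<Rightarrow> (real^'d \<Rightarrow> complex^'n) \<Rightarrow> bool" where
  "local_param \<Gamma> U \<gamma> \<longleftrightarrow> open U \<and>
     (\<exists>\<gamma>'. homeomorphism (ball 0 1) (\<Gamma> \<inter> U) \<gamma> \<gamma>') \<and>
     (\<forall>t\<in>ball 0 1. \<gamma> differentiable (at t) \<and> inj (frechet_derivative \<gamma> (at t))) \<and>
     (\<forall>i. continuous_on (ball 0 1) (\<lambda>t. frechet_derivative \<gamma> (at t) (axis i 1)))"

definition embedded_submanifold :: "'d::finite itself \<Rightarrow> (complex^'n) set \<Rightarrow> bool" where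
  "embedded_submanifold _ \<Gamma> \<longleftrightarrow> \<Gamma> \<subseteq> ball 0 1 \<and>
     (\<forall>p\<in>\<Gamma>. \<exists>U (\<gamma>::real^'d \<Rightarrow> complex^'n). p \<in> U \<and> local_param \<Gamma> U \<gamma>)"

text \<open>The tangent subspace V = D_p iota (T_p \<Gamma>), computed through local parametrizations.\<close>
definition tangent_image :: "'d::finite itself \<Rightarrow> (complex^'n) set \<Rightarrow> complex^'n \<Rightarrow> (complex^'n) set" where
  "tangent_image _ \<Gamma> p = {v. \<exists>U (\<gamma>::real^'d \<Rightarrow> complex^'n) t. local_param \<Gamma> U \<gamma> \<and>
      t \<in> ball 0 1 \<and> \<gamma> t = p \<and> v \<in> range (frechet_derivative \<gamma> (at t))}"

definition isotropic :: "'d::finite itself \<Rightarrow> (complex^'n) set \<Rightarrow> bool" where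
  "isotropic D \<Gamma> \<longleftrightarrow> (\<forall>p\<in>\<Gamma>. tangent_image D \<Gamma> p \<subseteq> sympl_compl p (tangent_image D \<Gamma> p))"

definition coisotropic :: "'d::finite itself \<Rightarrow> (complex^'n) set \<Rightarrow> bool" where
  "coisotropic D \<Gamma> \<longleftrightarrow> (\<forall>p\<in>\<Gamma>. sympl_compl p (tangent_image D \<Gamma> p) \<subseteq> tangent_image D \<Gamma> p)"

text \<open>A fixed enumeration 0..d-1 of the coordinate directions of R^d (the determinant below
  does not depend on this choice).\<close>
definition coord_enum :: "nat \<Rightarrow> 'd::finite" where
  "coord_enum = (SOME f. bij_betw f {..<CARD('d)} (UNIV::'d set))"

definition partial_t :: "(real^'d \<Rightarrow> complex^'n) \<Rightarrow> real^'d \<Rightarrow> nat \<Rightarrow> complex^'n" where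
  "partial_t \<gamma> t j = frechet_derivative \<gamma> (at t) (axis (coord_enum j) 1)"

definition G_mat :: "(real^'d \<Rightarrow> complex^'n) \<Rightarrow> real^'d \<Rightarrow> real mat" where
  "G_mat \<gamma> t = mat CARD('d) CARD('d)
     (\<lambda>(j,k). bergman_riem (\<gamma> t) (partial_t \<gamma> t j) (partial_t \<gamma> t k))"

definition H_mat :: "(real^'d \<Rightarrow> complex^'n) \<Rightarrow> real^'d \<Rightarrow> real mat" where
  "H_mat \<gamma> t = mat CARD('d) CARD('d)
     (\<lambda>(j,k). omega (\<gamma> t) (partial_t \<gamma> t j) (partial_t \<gamma> t k))"

definition W_mat :: "(real^'d \<Rightarrow> complex^'n) \<Rightarrow> real^'d \<Rightarrow> real mat" where
  "W_mat \<gamma> t = the (mat_inverse (G_mat \<gamma> t)) * H_mat \<gamma> t"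

text \<open>O_{m-1} for a d x d matrix W: block tridiagonal with (m-1) x (m-1) blocks,
  diagonal 2I, superdiagonal -I - iW, subdiagonal -I + iW.\<close>
definition O_mat :: "nat \<Rightarrow> real mat \<Rightarrow> complex mat" where
  "O_mat m W = (let d = dim_row W in mat ((m-1)*d) ((m-1)*d) (\<lambda>(i,j).
     let a = i div d; b = j div d; r = i mod d; s = j mod d;
         I = (if r = s then 1 else 0) :: complex;
         w = complex_of_real (W $$ (r,s)) in
     if a = b then 2 * I
     else if b = a + 1 then - I - \<i> * w
     else if a = b + 1 then - I + \<i> * w
     else 0))"

end

theory Submission
  imports Defs
begin

(* Let V be the tangent space and W the matrix, in the frame of the partial derivatives of the
   parametrisation, of the map sending v in V to the Bergman-orthogonal projection of Jv onto V.
   If Gamma is isotropic, JV is orthogonal to V, so W = 0 and O_(m-1) is, up to a permutation,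
   the d-fold direct sum of the tridiagonal matrix with rows (-1, 2, -1), whose determinant is m.
   If Gamma is co-isotropic, V is the direct sum of its symplectic complement, of dimension
   2n - d, on which W vanishes, and of d - (2n - d) directions of V inside JV, on which W^2 = -1.
   In a basis adapted to this splitting -W^2 is a 0/1 diagonal matrix, and block Gaussian
   elimination of O_(m-1), all of whose blocks are polynomials in W, decouples the directions:
   where W^2 = 0 the pivots are those of the scalar tridiagonal matrix, with product m, and
   where W^2 = -1 they all equal 2, because (I - iW)(I + iW) = I + W^2 vanishes there.
   Hence det O_(m-1) = 2^((m-1)(2d-2n)) m^(2n-d), and the square roots follow. *)

section \<open>Block matrices\<close>

definition block_mat :: "nat \<Rightarrow> nat \<Rightarrow> (nat \<Rightarrow> nat \<Rightarrow> 'a mat) \<Rightarrow> 'a mat" where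
  "block_mat k d F = mat (k * d) (k * d) (\<lambda>(i, j). F (i div d) (j div d) $$ (i mod d, j mod d))"

lemma block_mat_carrier [simp]: "block_mat k d F \<in> carrier_mat (k * d) (k * d)"
  by (simp add: block_mat_def)

lemma dim_block_mat [simp]:
  "dim_row (block_mat k d F) = k * d" "dim_col (block_mat k d F) = k * d"
  by (simp_all add: block_mat_def)

lemma index_block_mat:
  "i < k * d \<Longrightarrow> j < k * d \<Longrightarrow>
     block_mat k d F $$ (i, j) = F (i div d) (j div d) $$ (i mod d, j mod d)"
  by (simp add: block_mat_def)

lemma mod_less_of_less_mult: "i < k * d \<Longrightarrow> i mod d < (d::nat)"
  by (cases "d = 0") auto

lemma mult_add_less_mult: "b < k \<Longrightarrow> s < d \<Longrightarrow> b * d + s < k * (d::nat)"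
proof -
  assume "b < k" "s < d"
  then have "b * d + s < Suc b * d" and "Suc b * d \<le> k * d"
    by (simp, intro mult_le_mono1) simp
  then show ?thesis by linarith
qed

lemma sum_lessThan_mult:
  fixes f :: "nat \<Rightarrow> 'a::comm_monoid_add"
  shows "(\<Sum>l<k * d. f l) = (\<Sum>b<k. \<Sum>s<d. f (b * d + s))"
  by (simp add: sum.nat_group[symmetric] sum.shift_bounds_nat_ivl[of f 0 _ d, simplified]
      add.commute atLeast0LessThan)

lemma prod_lessThan_mult:
  fixes f :: "nat \<Rightarrow> 'a::comm_monoid_mult"
  shows "(\<Prod>l<k * d. f l) = (\<Prod>b<k. \<Prod>s<d. f (b * d + s))"
  by (simp add: prod.nat_group[symmetric] prod.shift_bounds_nat_ivl[of f 0 _ d, simplified]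
      add.commute atLeast0LessThan)

lemma block_mat_mult:
  fixes F G H :: "nat \<Rightarrow> nat \<Rightarrow> 'a::semiring_0 mat"
  assumes F: "\<And>a b. F a b \<in> carrier_mat d d" and G: "\<And>a b. G a b \<in> carrier_mat d d"
    and H: "\<And>a c r u. a < k \<Longrightarrow> c < k \<Longrightarrow> r < d \<Longrightarrow> u < d \<Longrightarrow>
       H a c $$ (r, u) = (\<Sum>b<k. (F a b * G b c) $$ (r, u))"
  shows "block_mat k d F * block_mat k d G = block_mat k d H"
proof (rule eq_matI)
  fix i j assume "i < dim_row (block_mat k d H)" and "j < dim_col (block_mat k d H)"
  then have i: "i < k * d" and j: "j < k * d" by auto
  have ia: "i div d < k" and ja: "j div d < k"
    using i j by (simp_all add: less_mult_imp_div_less)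
  have r: "i mod d < d" and u: "j mod d < d"
    using i j by (simp_all add: mod_less_of_less_mult)
  have block_entry: "(\<Sum>s<d. block_mat k d F $$ (i, b * d + s) * block_mat k d G $$ (b * d + s, j))
      = (F (i div d) b * G b (j div d)) $$ (i mod d, j mod d)" if b: "b < k" for b
    using F[of "i div d" b] G[of b "j div d"] r u i j mult_add_less_mult[OF b]
    by (auto simp: index_block_mat scalar_prod_def atLeast0LessThan intro!: sum.cong)
  have "(block_mat k d F * block_mat k d G) $$ (i, j)
      = (\<Sum>l<k * d. block_mat k d F $$ (i, l) * block_mat k d G $$ (l, j))"
    using i j by (simp add: scalar_prod_def atLeast0LessThan)
  also have "\<dots> = (\<Sum>b<k. (F (i div d) b * G b (j div d)) $$ (i mod d, j mod d))"
    by (simp add: sum_lessThan_mult block_entry)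
  also have "\<dots> = block_mat k d H $$ (i, j)"
    using H[OF ia ja r u] i j by (simp add: index_block_mat)
  finally show "(block_mat k d F * block_mat k d G) $$ (i, j) = block_mat k d H $$ (i, j)" .
qed auto

lemma div_mod_less_of_less:
  fixes i j d :: nat
  assumes "i < j"
  shows "i div d < j div d \<or> (i div d = j div d \<and> i mod d < j mod d)"
proof -
  have "i div d \<le> j div d" using assms by (simp add: div_le_mono)
  moreover have "i mod d < j mod d" if "i div d = j div d"
    using assms that by (metis add_less_cancel_left div_mult_mod_eq)
  ultimately show ?thesis by linarith
qed

lemma det_block_mat_lower_triangular:
  fixes F :: "nat \<Rightarrow> nat \<Rightarrow> 'a::comm_ring_1 mat"
  assumes zero: "\<And>a b. a < b \<Longrightarrow> F a b = 0\<^sub>m d d"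
    and diag: "\<And>a. F a a = mat_diag d (f a)"
  shows "det (block_mat k d F) = (\<Prod>a<k. \<Prod>s<d. f a s)"
proof -
  have "det (block_mat k d F) = prod_list (diag_mat (block_mat k d F))"
  proof (rule det_lower_triangular[OF _ block_mat_carrier])
    fix i j assume ij: "i < j" and j: "j < k * d"
    then have i: "i < k * d" by simp
    show "block_mat k d F $$ (i, j) = 0"
      using div_mod_less_of_less[OF ij, of d] mod_less_of_less_mult[OF i] mod_less_of_less_mult[OF j]
      by (auto simp: index_block_mat[OF i j] zero diag mat_diag_def)
  qed
  also have "\<dots> = (\<Prod>i<k * d. f (i div d) (i mod d))"
    by (auto simp: prod_list_diag_prod atLeast0LessThan index_block_mat diag mat_diag_def
        mod_less_of_less_mult intro!: prod.cong)
  finally show ?thesis by (simp add: prod_lessThan_mult)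
qed

lemma det_block_mat_upper_triangular:
  fixes F :: "nat \<Rightarrow> nat \<Rightarrow> 'a::comm_ring_1 mat"
  assumes zero: "\<And>a b. b < a \<Longrightarrow> F a b = 0\<^sub>m d d"
    and diag: "\<And>a. F a a = mat_diag d (f a)"
  shows "det (block_mat k d F) = (\<Prod>a<k. \<Prod>s<d. f a s)"
proof -
  have "det (block_mat k d F) = prod_list (diag_mat (block_mat k d F))"
  proof (rule det_upper_triangular[OF upper_triangularI block_mat_carrier])
    fix i j assume ji: "j < i" and "i < dim_row (block_mat k d F)"
    then have i: "i < k * d" and j: "j < k * d" by simp_all
    show "block_mat k d F $$ (i, j) = 0"
      using div_mod_less_of_less[OF ji, of d] mod_less_of_less_mult[OF i] mod_less_of_less_mult[OF j]
      by (auto simp: index_block_mat[OF i j] zero diag mat_diag_def)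
  qed
  also have "\<dots> = (\<Prod>i<k * d. f (i div d) (i mod d))"
    by (auto simp: prod_list_diag_prod atLeast0LessThan index_block_mat diag mat_diag_def
        mod_less_of_less_mult intro!: prod.cong)
  finally show ?thesis by (simp add: prod_lessThan_mult)
qed

definition block_diag_mat :: "nat \<Rightarrow> nat \<Rightarrow> 'a::zero mat \<Rightarrow> 'a mat" where
  "block_diag_mat k d M = block_mat k d (\<lambda>a b. if a = b then M else 0\<^sub>m d d)"

lemma block_diag_mat_carrier [simp]: "block_diag_mat k d M \<in> carrier_mat (k * d) (k * d)"
  by (simp add: block_diag_mat_def)

lemma block_diag_mat_mult_block_mat:
  fixes M :: "'a::semiring_0 mat"
  assumes M: "M \<in> carrier_mat d d" and G: "\<And>a b. G a b \<in> carrier_mat d d"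
  shows "block_diag_mat k d M * block_mat k d G = block_mat k d (\<lambda>a b. M * G a b)"
  unfolding block_diag_mat_def
proof (rule block_mat_mult)
  fix a c r u assume "a < k" "r < d" "u < d"
  moreover have "((if a = b then M else 0\<^sub>m d d) * G b c) $$ (r, u)
      = (if b = a then (M * G a c) $$ (r, u) else 0)" if "r < d" "u < d" for b
    using G[of b c] that by auto
  ultimately show "(M * G a c) $$ (r, u) = (\<Sum>b<k. ((if a = b then M else 0\<^sub>m d d) * G b c) $$ (r, u))"
    by simp
qed (use M G in auto)

lemma block_mat_mult_block_diag_mat:
  fixes M :: "'a::semiring_0 mat"
  assumes M: "M \<in> carrier_mat d d" and G: "\<And>a b. G a b \<in> carrier_mat d d"
  shows "block_mat k d G * block_diag_mat k d M = block_mat k d (\<lambda>a b. G a b * M)"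
  unfolding block_diag_mat_def
proof (rule block_mat_mult)
  fix a c r u assume "c < k" "r < d" "u < d"
  moreover have "(G a b * (if b = c then M else 0\<^sub>m d d)) $$ (r, u)
      = (if b = c then (G a c * M) $$ (r, u) else 0)" if "r < d" "u < d" for b
    using G[of a b] that by auto
  ultimately show "(G a c * M) $$ (r, u) = (\<Sum>b<k. (G a b * (if b = c then M else 0\<^sub>m d d)) $$ (r, u))"
    by simp
qed (use M G in auto)

lemma block_diag_mat_one: "block_diag_mat k d (1\<^sub>m d) = (1\<^sub>m (k * d) :: 'a::{zero,one} mat)"
  unfolding block_diag_mat_def
  by (rule eq_matI) (auto simp: index_block_mat mod_less_of_less_mult, metis div_mult_mod_eq)

lemma det_block_mat_conjugate:
  fixes F :: "nat \<Rightarrow> nat \<Rightarrow> 'a::comm_ring_1 mat"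
  assumes C: "C \<in> carrier_mat d d" and C': "C' \<in> carrier_mat d d" and inv: "C' * C = 1\<^sub>m d"
    and F: "\<And>a b. F a b \<in> carrier_mat d d"
  shows "det (block_mat k d (\<lambda>a b. C' * F a b * C)) = det (block_mat k d F)"
proof -
  have conj: "block_mat k d (\<lambda>a b. C' * F a b * C)
      = block_diag_mat k d C' * block_mat k d F * block_diag_mat k d C"
    using C C' F by (simp add: block_diag_mat_mult_block_mat block_mat_mult_block_diag_mat)
  have "block_diag_mat k d C' * block_diag_mat k d C
      = block_mat k d (\<lambda>a b. C' * (if a = b then C else 0\<^sub>m d d))"
    unfolding block_diag_mat_def[of k d C] by (rule block_diag_mat_mult_block_mat[OF C']) (use C in auto)
  also have "\<dots> = block_diag_mat k d (1\<^sub>m d)"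
    using C' inv unfolding block_diag_mat_def by (intro arg_cong[where f = "block_mat k d"] ext) auto
  also have "\<dots> = 1\<^sub>m (k * d)"
    by (rule block_diag_mat_one)
  finally have "det (block_diag_mat k d C') * det (block_diag_mat k d C) = 1"
    by (simp flip: det_mult[OF block_diag_mat_carrier block_diag_mat_carrier])
  then show ?thesis
    unfolding conj
    by (simp add: det_mult[OF mult_carrier_mat[OF block_diag_mat_carrier block_mat_carrier]
          block_diag_mat_carrier] det_mult[OF block_diag_mat_carrier block_mat_carrier] mult.commute
        flip: mult.assoc)
qed

section \<open>The determinant of O\<close>

definition O_block :: "nat \<Rightarrow> complex mat \<Rightarrow> nat \<Rightarrow> nat \<Rightarrow> complex mat" where
  "O_block d X a b =
     (if a = b then 2 \<cdot>\<^sub>m 1\<^sub>m d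
      else if b = Suc a then - 1\<^sub>m d - \<i> \<cdot>\<^sub>m X
      else if a = Suc b then - 1\<^sub>m d + \<i> \<cdot>\<^sub>m X
      else 0\<^sub>m d d)"

lemma O_block_carrier [simp]: "X \<in> carrier_mat d d \<Longrightarrow> O_block d X a b \<in> carrier_mat d d"
  by (simp add: O_block_def minus_carrier_mat uminus_carrier_mat)

lemma O_mat_eq_block_mat:
  assumes "W \<in> carrier_mat d d"
  shows "O_mat m W = block_mat (m - 1) d (O_block d (map_mat complex_of_real W))"
proof (rule eq_matI)
  fix i j assume "i < dim_row (block_mat (m - 1) d (O_block d (map_mat complex_of_real W)))"
    and "j < dim_col (block_mat (m - 1) d (O_block d (map_mat complex_of_real W)))"
  then have i: "i < (m - 1) * d" and j: "j < (m - 1) * d" by simp_all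
  then show "O_mat m W $$ (i, j) = block_mat (m - 1) d (O_block d (map_mat complex_of_real W)) $$ (i, j)"
    using assms mod_less_of_less_mult[OF i] mod_less_of_less_mult[OF j]
    by (auto simp: O_mat_def Let_def O_block_def index_block_mat)
qed (use assms in \<open>auto simp: O_mat_def\<close>)

lemma O_block_conjugate:
  assumes X: "X \<in> carrier_mat d d" and C: "C \<in> carrier_mat d d" and C': "C' \<in> carrier_mat d d"
    and inv: "C' * C = 1\<^sub>m d"
  shows "O_block d (C' * X * C) a b = C' * O_block d X a b * C"
proof -
  have conj: "C' * (\<alpha> \<cdot>\<^sub>m 1\<^sub>m d + \<beta> \<cdot>\<^sub>m X) * C = \<alpha> \<cdot>\<^sub>m 1\<^sub>m d + \<beta> \<cdot>\<^sub>m (C' * X * C)" for \<alpha> \<beta>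
  proof -
    have "C' * (\<alpha> \<cdot>\<^sub>m 1\<^sub>m d + \<beta> \<cdot>\<^sub>m X) = C' * (\<alpha> \<cdot>\<^sub>m 1\<^sub>m d) + C' * (\<beta> \<cdot>\<^sub>m X)"
      by (rule mult_add_distrib_mat[of _ d d]) (use X C' in auto)
    also have "\<dots> = \<alpha> \<cdot>\<^sub>m C' + \<beta> \<cdot>\<^sub>m (C' * X)"
      using mult_smult_distrib[of C' d d "1\<^sub>m d" d \<alpha>] mult_smult_distrib[OF C' X] C' by simp
    finally have "C' * (\<alpha> \<cdot>\<^sub>m 1\<^sub>m d + \<beta> \<cdot>\<^sub>m X) * C = (\<alpha> \<cdot>\<^sub>m C') * C + (\<beta> \<cdot>\<^sub>m (C' * X)) * C"
      using X C C' by (simp add: add_mult_distrib_mat[of _ d d])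
    also have "\<dots> = \<alpha> \<cdot>\<^sub>m 1\<^sub>m d + \<beta> \<cdot>\<^sub>m (C' * X * C)"
      using mult_smult_assoc_mat[OF C' C, of \<alpha>] mult_smult_assoc_mat[of "C' * X" d d C d \<beta>] X C C' inv
      by simp
    finally show ?thesis .
  qed
  have lin: "O_block d Y a b =
      (if a = b then 2 else if b = Suc a then -1 else if a = Suc b then -1 else 0) \<cdot>\<^sub>m 1\<^sub>m d
      + (if a = b then 0 else if b = Suc a then - \<i> else if a = Suc b then \<i> else 0) \<cdot>\<^sub>m Y"
    if "Y \<in> carrier_mat d d" for Y
    using that by (intro eq_matI) (auto simp: O_block_def)
  have "C' * X * C \<in> carrier_mat d d" using X C C' by simp
  then show ?thesis by (simp only: lin[OF X] lin[of "C' * X * C"] conj)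
qed

text \<open>The pivots of Gaussian elimination on the tridiagonal matrix with rows (-1, 2, -1):
  c_0 = 2 and c_(a+1) = 2 - 1 / c_a, so c_a = (a + 2) / (a + 1) and their product telescopes.\<close>

definition tridiag_pivot :: "nat \<Rightarrow> real" where
  "tridiag_pivot a = (a + 2) / (a + 1)"

lemma tridiag_pivot_pos: "tridiag_pivot a > 0"
  by (simp add: tridiag_pivot_def)

lemma tridiag_pivot_0: "tridiag_pivot 0 = 2"
  by (simp add: tridiag_pivot_def)

lemma tridiag_pivot_Suc: "tridiag_pivot (Suc a) + 1 / tridiag_pivot a = 2"
proof -
  have "real a + 2 \<noteq> 0" by linarith
  then have "(real a + 3) / (real a + 2) + (real a + 1) / (real a + 2) = 2"
    by (simp add: add_divide_distrib[symmetric] field_simps)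
  then show ?thesis by (simp add: tridiag_pivot_def add.commute)
qed

lemma prod_tridiag_pivot: "(\<Prod>a<k. tridiag_pivot a) = k + 1"
proof (induction k)
  case (Suc k)
  have "real k + 1 \<noteq> 0" by linarith
  with Suc show ?case by (simp add: tridiag_pivot_def field_simps)
qed simp

lemma sum_lessThan_at_and_before:
  fixes g :: "nat \<Rightarrow> 'a::comm_monoid_add"
  assumes a: "a < k" and zero: "\<And>b. b < k \<Longrightarrow> b \<noteq> a \<Longrightarrow> Suc b \<noteq> a \<Longrightarrow> g b = 0"
  shows "(\<Sum>b<k. g b) = g a + (case a of 0 \<Rightarrow> 0 | Suc b \<Rightarrow> g b)"
proof -
  have "(\<Sum>b<k. g b) = (\<Sum>b\<in>{a} \<union> {b. Suc b = a}. g b)"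
    by (rule sum.mono_neutral_right) (use a zero in auto)
  also have "\<dots> = g a + (case a of 0 \<Rightarrow> 0 | Suc b \<Rightarrow> g b)"
    by (cases a) (simp_all add: insert_commute add.commute)
  finally show ?thesis .
qed

lemma mat_diag_commute:
  fixes M :: "'a::comm_ring_1 mat"
  assumes M: "M \<in> carrier_mat d d"
    and compat: "\<And>r u. r < d \<Longrightarrow> u < d \<Longrightarrow> M $$ (r, u) \<noteq> 0 \<Longrightarrow> \<delta> r = \<delta> u"
  shows "M * mat_diag d (\<lambda>i. h (\<delta> i)) = mat_diag d (\<lambda>i. h (\<delta> i)) * M"
proof (rule eq_matI)
  fix i j assume "i < dim_row (mat_diag d (\<lambda>i. h (\<delta> i)) * M)"
    and "j < dim_col (mat_diag d (\<lambda>i. h (\<delta> i)) * M)"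
  then have "i < d" "j < d" using M by (simp_all add: mat_diag_def)
  then show "(M * mat_diag d (\<lambda>i. h (\<delta> i))) $$ (i, j) = (mat_diag d (\<lambda>i. h (\<delta> i)) * M) $$ (i, j)"
    using M compat[of i j] by (cases "M $$ (i, j) = 0") (auto simp: mat_diag_mult_left mat_diag_mult_right mult.commute)
qed (use M in \<open>simp_all add: mat_diag_def\<close>)

text \<open>X commutes with diag(delta) and (I - iX)(I + iX) = diag(1 - delta), so block elimination
  with diagonal pivot blocks follows, coordinate by coordinate, the scalar recursion of
  tridiag_pivot where delta_i = 0 and keeps the pivot 2 where delta_i = 1.\<close>

locale neg_square_diag =
  fixes d :: nat and X :: "complex mat" and \<delta> :: "nat \<Rightarrow> complex"
  assumes carrier: "X \<in> carrier_mat d d"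
    and neg_square: "- (X * X) = mat_diag d \<delta>"
    and \<delta>_01: "\<And>i. i < d \<Longrightarrow> \<delta> i = 0 \<or> \<delta> i = 1"
begin

definition "I_plus_iX = 1\<^sub>m d + \<i> \<cdot>\<^sub>m X"
definition "I_minus_iX = 1\<^sub>m d - \<i> \<cdot>\<^sub>m X"
definition "pivot a i = (if \<delta> i = 1 then 2 else complex_of_real (tridiag_pivot a))"

definition "lower_factor a b =
  (if a = b then 1\<^sub>m d
   else if a = Suc b then - (I_minus_iX * mat_diag d (\<lambda>i. 1 / pivot b i))
   else 0\<^sub>m d d)"

definition "upper_factor a b =
  (if a = b then mat_diag d (pivot a) else if b = Suc a then - I_plus_iX else 0\<^sub>m d d)"

lemma I_plus_iX_carrier [simp]: "I_plus_iX \<in> carrier_mat d d"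
  and I_minus_iX_carrier [simp]: "I_minus_iX \<in> carrier_mat d d"
  using carrier by (auto simp: I_plus_iX_def I_minus_iX_def minus_carrier_mat)

lemma lower_factor_carrier [simp]: "lower_factor a b \<in> carrier_mat d d"
  by (auto simp: lower_factor_def uminus_carrier_mat intro: mult_carrier_mat[of _ d d])

lemma upper_factor_carrier [simp]: "upper_factor a b \<in> carrier_mat d d"
  by (auto simp: upper_factor_def uminus_carrier_mat)

lemma pivot_nonzero: "pivot a i \<noteq> 0"
  using tridiag_pivot_pos[of a] by (auto simp: pivot_def)

lemma pivot_0: "pivot 0 i = 2"
  by (simp add: pivot_def tridiag_pivot_0)

lemma pivot_Suc: "i < d \<Longrightarrow> pivot (Suc a) i + (1 - \<delta> i) / pivot a i = 2"
  using \<delta>_01[of i] arg_cong[OF tridiag_pivot_Suc[of a], of complex_of_real]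
  by (auto simp: pivot_def)

lemma X_entry_nonzero_imp_same_\<delta>:
  assumes r: "r < d" and u: "u < d" and nz: "X $$ (r, u) \<noteq> 0"
  shows "\<delta> r = \<delta> u"
proof -
  have "X * mat_diag d \<delta> = mat_diag d \<delta> * X"
    unfolding neg_square[symmetric] using carrier by simp
  then have "(X * mat_diag d \<delta>) $$ (r, u) = (mat_diag d \<delta> * X) $$ (r, u)" by simp
  then have "X $$ (r, u) * \<delta> u = \<delta> r * X $$ (r, u)"
    using carrier r u by (simp add: mat_diag_mult_left mat_diag_mult_right)
  then show ?thesis using nz by simp
qed

lemma I_plus_iX_commute: "I_plus_iX * mat_diag d (\<lambda>i. h (\<delta> i)) = mat_diag d (\<lambda>i. h (\<delta> i)) * I_plus_iX"
  using carrier X_entry_nonzero_imp_same_\<delta>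
  by (intro mat_diag_commute) (auto simp: I_plus_iX_def split: if_splits)

lemma I_minus_iX_mult_I_plus_iX: "I_minus_iX * I_plus_iX = mat_diag d (\<lambda>i. 1 - \<delta> i)"
proof -
  have "I_minus_iX * I_plus_iX = 1\<^sub>m d * I_plus_iX - (\<i> \<cdot>\<^sub>m X) * I_plus_iX"
    unfolding I_minus_iX_def by (rule minus_mult_distrib_mat[of _ d d _ _ d]) (use carrier in auto)
  also have "(\<i> \<cdot>\<^sub>m X) * I_plus_iX = \<i> \<cdot>\<^sub>m X + (\<i> * \<i>) \<cdot>\<^sub>m (X * X)"
  proof -
    have "(\<i> \<cdot>\<^sub>m X) * I_plus_iX = (\<i> \<cdot>\<^sub>m X) * 1\<^sub>m d + (\<i> \<cdot>\<^sub>m X) * (\<i> \<cdot>\<^sub>m X)"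
      unfolding I_plus_iX_def by (rule mult_add_distrib_mat[of _ d d]) (use carrier in auto)
    also have "(\<i> \<cdot>\<^sub>m X) * 1\<^sub>m d = \<i> \<cdot>\<^sub>m X" using carrier by simp
    also have "(\<i> \<cdot>\<^sub>m X) * (\<i> \<cdot>\<^sub>m X) = \<i> \<cdot>\<^sub>m (X * (\<i> \<cdot>\<^sub>m X))"
      by (rule mult_smult_assoc_mat[of _ d d]) (use carrier in auto)
    also have "X * (\<i> \<cdot>\<^sub>m X) = \<i> \<cdot>\<^sub>m (X * X)"
      by (rule mult_smult_distrib[of _ d d]) (use carrier in auto)
    also have "\<i> \<cdot>\<^sub>m (\<i> \<cdot>\<^sub>m (X * X)) = (\<i> * \<i>) \<cdot>\<^sub>m (X * X)"
      by (rule eq_matI) auto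
    finally show ?thesis .
  qed
  also have "X * X = - mat_diag d \<delta>" using neg_square by (metis uminus_uminus_mat)
  finally show ?thesis
    using carrier by (intro eq_matI) (auto simp: I_plus_iX_def mat_diag_def)
qed

lemma lower_mult_upper_Suc:
  "lower_factor (Suc b) b * upper_factor b c =
     (if c = b then - I_minus_iX
      else if c = Suc b then mat_diag d (\<lambda>i. (1 - \<delta> i) / pivot b i)
      else 0\<^sub>m d d)"
proof -
  let ?D = "mat_diag d (\<lambda>i. 1 / pivot b i)"
  have lower: "lower_factor (Suc b) b = - (I_minus_iX * ?D)"
    by (simp add: lower_factor_def)
  have inverse: "?D * mat_diag d (pivot b) = 1\<^sub>m d"
    by (simp add: pivot_nonzero flip: mat_diag_one)
  have "- (I_minus_iX * ?D) * mat_diag d (pivot b) = - (I_minus_iX * ?D * mat_diag d (pivot b))"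
    by (rule uminus_mult_left_mat) (simp add: mat_diag_def)
  also have "\<dots> = - I_minus_iX"
    by (simp only: assoc_mult_mat[OF I_minus_iX_carrier mat_diag_dim mat_diag_dim] inverse
        right_mult_one_mat[OF I_minus_iX_carrier])
  finally have diag: "- (I_minus_iX * ?D) * mat_diag d (pivot b) = - I_minus_iX" .
  have "- (I_minus_iX * ?D) * - I_plus_iX = - (I_minus_iX * ?D * - I_plus_iX)"
    by (rule uminus_mult_left_mat) (simp add: mat_diag_def carrier_matD[OF I_plus_iX_carrier])
  also have "I_minus_iX * ?D * - I_plus_iX = - (I_minus_iX * ?D * I_plus_iX)"
    by (rule uminus_mult_right_mat) (simp add: mat_diag_def carrier_matD[OF I_plus_iX_carrier])
  also have "- (- (I_minus_iX * ?D * I_plus_iX)) = I_minus_iX * ?D * I_plus_iX"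
    by (rule uminus_uminus_mat)
  also have "\<dots> = I_minus_iX * I_plus_iX * ?D"
    using I_plus_iX_commute[of "\<lambda>x. 1 / (if x = 1 then 2 else complex_of_real (tridiag_pivot b))"]
    by (simp add: pivot_def assoc_mult_mat[of _ d d _ d _ d] mat_diag_dim)
  also have "\<dots> = mat_diag d (\<lambda>i. (1 - \<delta> i) / pivot b i)"
    by (simp add: I_minus_iX_mult_I_plus_iX)
  finally have super: "- (I_minus_iX * ?D) * - I_plus_iX = mat_diag d (\<lambda>i. (1 - \<delta> i) / pivot b i)" .
  show ?thesis
    using right_mult_zero_mat[OF lower_factor_carrier[of "Suc b" b], of d]
    by (auto simp: lower upper_factor_def diag super)
qed

lemma O_block_eq_LU_sum:
  assumes a: "a < k" and r: "r < d" and u: "u < d"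
  shows "O_block d X a c $$ (r, u) = (\<Sum>b<k. (lower_factor a b * upper_factor b c) $$ (r, u))"
proof -
  have "(\<Sum>b<k. (lower_factor a b * upper_factor b c) $$ (r, u))
      = (lower_factor a a * upper_factor a c) $$ (r, u)
        + (case a of 0 \<Rightarrow> 0 | Suc b \<Rightarrow> (lower_factor a b * upper_factor b c) $$ (r, u))"
    by (rule sum_lessThan_at_and_before[OF a]) (simp add: lower_factor_def r u left_mult_zero_mat[OF upper_factor_carrier])
  also have "lower_factor a a * upper_factor a c = upper_factor a c"
    by (simp add: lower_factor_def left_mult_one_mat[OF upper_factor_carrier])
  finally have sum: "(\<Sum>b<k. (lower_factor a b * upper_factor b c) $$ (r, u))
      = upper_factor a c $$ (r, u)
        + (case a of 0 \<Rightarrow> 0 | Suc b \<Rightarrow> (lower_factor a b * upper_factor b c) $$ (r, u))" .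
  show ?thesis
  proof (cases a)
    case 0
    then show ?thesis
      unfolding sum using carrier r u
      by (auto simp: O_block_def upper_factor_def pivot_0 I_plus_iX_def mat_diag_def)
  next
    case (Suc b)
    have "O_block d X (Suc b) c $$ (r, u) = upper_factor (Suc b) c $$ (r, u)
        + (lower_factor (Suc b) b * upper_factor b c) $$ (r, u)"
      unfolding lower_mult_upper_Suc using carrier r u pivot_Suc[OF r, of b]
      by (auto simp: O_block_def upper_factor_def I_plus_iX_def I_minus_iX_def mat_diag_def)
    then show ?thesis
      unfolding sum using Suc by simp
  qed
qed

lemma block_mat_O_block_eq_LU:
  "block_mat k d (O_block d X) = block_mat k d lower_factor * block_mat k d upper_factor"
  by (rule block_mat_mult[symmetric]) (simp_all add: O_block_eq_LU_sum)

lemma det_block_mat_O_block: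
  "det (block_mat k d (O_block d X))
     = 2 ^ (k * card {i. i < d \<and> \<delta> i = 1}) * of_nat (k + 1) ^ card {i. i < d \<and> \<delta> i \<noteq> 1}"
proof -
  have "det (block_mat k d lower_factor) = 1"
    by (subst det_block_mat_lower_triangular[where f = "\<lambda>_ _. 1"])
      (auto simp: lower_factor_def mat_diag_one)
  moreover have "det (block_mat k d upper_factor) = (\<Prod>a<k. \<Prod>i<d. pivot a i)"
    by (rule det_block_mat_upper_triangular) (auto simp: upper_factor_def)
  moreover have "(\<Prod>i<d. pivot a i) = 2 ^ card {i. i < d \<and> \<delta> i = 1}
      * complex_of_real (tridiag_pivot a) ^ card {i. i < d \<and> \<delta> i \<noteq> 1}" for a
  proof -
    have "(\<Prod>i<d. pivot a i) = (\<Prod>i\<in>{..<d} \<inter> {i. \<delta> i = 1}. 2)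
        * (\<Prod>i\<in>{..<d} \<inter> - {i. \<delta> i = 1}. complex_of_real (tridiag_pivot a))"
      unfolding pivot_def by (rule prod.If_cases) simp
    moreover have "{..<d} \<inter> {i. \<delta> i = 1} = {i. i < d \<and> \<delta> i = 1}"
      and "{..<d} \<inter> - {i. \<delta> i = 1} = {i. i < d \<and> \<delta> i \<noteq> 1}" by auto
    ultimately show ?thesis by simp
  qed
  ultimately show ?thesis
    by (simp add: block_mat_O_block_eq_LU det_mult[OF block_mat_carrier block_mat_carrier]
        prod.distrib power_mult[symmetric] mult.commute prod_power_distrib[symmetric]
        prod_tridiag_pivot flip: of_real_prod)
qed

end

lemma det_block_mat_O_block_of_square_similar_diag:
  fixes W C C' :: "complex mat"
  assumes W: "W \<in> carrier_mat d d" and C: "C \<in> carrier_mat d d" and C': "C' \<in> carrier_mat d d"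
    and inv: "C' * C = 1\<^sub>m d" and inv': "C * C' = 1\<^sub>m d"
    and square: "W * W * C = - (C * mat_diag d \<delta>)"
    and \<delta>_01: "\<And>i. i < d \<Longrightarrow> \<delta> i = 0 \<or> \<delta> i = 1"
  shows "det (block_mat k d (O_block d W))
     = 2 ^ (k * card {i. i < d \<and> \<delta> i = 1}) * of_nat (k + 1) ^ card {i. i < d \<and> \<delta> i \<noteq> 1}"
proof -
  define X where "X = C' * W * C"
  have X: "X \<in> carrier_mat d d" using W C C' by (simp add: X_def)
  have "X * X = C' * (W * (C * C') * W * C)"
    using W C C' by (simp add: X_def assoc_mult_mat[of _ d d _ d _ d])
  also have "\<dots> = C' * (W * W * C)"
    using W C by (simp add: inv' assoc_mult_mat[of _ d d _ d _ d])
  also have "\<dots> = - (C' * C * mat_diag d \<delta>)"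
    using C C' by (simp add: square assoc_mult_mat[of _ d d _ d _ d] mult_carrier_mat[of _ d d])
  finally have "- (X * X) = mat_diag d \<delta>"
    using inv left_mult_one_mat[OF mat_diag_dim[of d \<delta>]] by simp
  then interpret neg_square_diag d X \<delta>
    using X \<delta>_01 by unfold_locales
  have "C * X * C' = (C * C') * W * (C * C')"
    using W C C' by (simp add: X_def assoc_mult_mat[of _ d d _ d _ d])
  then have "W = C * X * C'"
    using W by (simp add: inv')
  then have "O_block d W = (\<lambda>a b. C * O_block d X a b * C')"
    using O_block_conjugate[OF X C' C inv'] by auto
  then show ?thesis
    using det_block_mat_conjugate[OF C' C inv', of "O_block d X" k] X
    by (simp add: det_block_mat_O_block)
qed

lemma det_O_mat_of_square_similar_diag:
  fixes W C :: "real mat" and \<delta> :: "nat \<Rightarrow> real"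
  assumes W: "W \<in> carrier_mat d d" and C: "C \<in> carrier_mat d d" and det_C: "det C \<noteq> 0"
    and square: "W * W * C = - (C * mat_diag d \<delta>)"
    and \<delta>_01: "\<And>i. i < d \<Longrightarrow> \<delta> i = 0 \<or> \<delta> i = 1" and m: "m \<ge> 1"
  shows "det (O_mat m W)
     = 2 ^ ((m - 1) * card {i. i < d \<and> \<delta> i = 1}) * of_nat m ^ card {i. i < d \<and> \<delta> i \<noteq> 1}"
proof -
  let ?c = "map_mat complex_of_real"
  have cC: "?c C \<in> carrier_mat d d" using C by simp
  have "det (?c C) \<noteq> 0" using det_C by (simp add: of_real_hom.hom_det)
  then have "?c C \<in> Units (ring_mat TYPE(complex) d ())"
    by (rule det_non_zero_imp_unit[OF cC])
  then obtain C' where C': "C' \<in> carrier_mat d d" and inv: "C' * ?c C = 1\<^sub>m d" "?c C * C' = 1\<^sub>m d"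
    unfolding Units_def ring_mat_def by auto
  have "?c (W * W * C) = ?c W * ?c W * ?c C"
    using W C by (simp add: of_real_hom.mat_hom_mult[of _ d d _ d])
  moreover have "?c (- (C * mat_diag d \<delta>)) = - (?c C * mat_diag d (\<lambda>i. complex_of_real (\<delta> i)))"
    using C cC by (intro eq_matI) (auto simp: mat_diag_mult_right)
  ultimately have "?c W * ?c W * ?c C = - (?c C * mat_diag d (\<lambda>i. complex_of_real (\<delta> i)))"
    using square by simp
  from det_block_mat_O_block_of_square_similar_diag[OF _ cC C' inv this, of "m - 1"] W \<delta>_01 m
  show ?thesis
    by (simp add: O_mat_eq_block_mat[OF W])
qed

section \<open>The Bergman metric\<close>

definition hermitian_dot :: "complex^'n \<Rightarrow> complex^'n \<Rightarrow> complex" where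
  "hermitian_dot x y = (\<Sum>j\<in>UNIV. x $ j * cnj (y $ j))"

lemma inner_eq_Re_hermitian_dot: "inner x y = Re (hermitian_dot x y)"
  by (simp add: inner_vec_def inner_complex_def hermitian_dot_def Re_sum)

lemma hermitian_dot_add_left: "hermitian_dot (x + y) z = hermitian_dot x z + hermitian_dot y z"
  by (simp add: hermitian_dot_def algebra_simps sum.distrib)

lemma hermitian_dot_scaleR_left: "hermitian_dot (r *\<^sub>R x) z = of_real r * hermitian_dot x z"
  unfolding hermitian_dot_def sum_distrib_left
  by (simp only: vector_scaleR_component) (simp add: scaleR_conv_of_real mult.assoc)

lemma hermitian_dot_scalar_right: "hermitian_dot x (c *s z) = cnj c * hermitian_dot x z"
  by (simp add: hermitian_dot_def sum_distrib_left algebra_simps)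

lemma bergman_riem_eq:
  "bergman_riem p x y = inner x y / (1 - (norm p)\<^sup>2)
     + Re (hermitian_dot x p * cnj (hermitian_dot y p)) / (1 - (norm p)\<^sup>2)\<^sup>2"
proof -
  define a where "a = complex_of_real (1 - (norm p)\<^sup>2)"
  have entry: "bergman_herm p j k * x $ j * cnj (y $ k)
      = (if k = j then x $ j * cnj (y $ j) / a else 0)
        + (x $ j * cnj (p $ j)) * cnj (y $ k * cnj (p $ k)) / a\<^sup>2" for j k
    by (simp add: bergman_herm_def a_def algebra_simps)
  have "(\<Sum>j\<in>UNIV. \<Sum>k\<in>UNIV. bergman_herm p j k * x $ j * cnj (y $ k))
      = hermitian_dot x y / a + hermitian_dot x p * cnj (hermitian_dot y p) / a\<^sup>2"
    by (simp add: entry sum.distrib hermitian_dot_def sum_divide_distrib sum_product cnj_sum)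
  then show ?thesis
    by (simp add: bergman_riem_def a_def inner_eq_Re_hermitian_dot Re_divide_of_real
        del: of_real_power flip: of_real_power)
qed

definition bergman_op :: "complex^'n \<Rightarrow> complex^'n \<Rightarrow> complex^'n" where
  "bergman_op p y = (1 / (1 - (norm p)\<^sup>2)) *\<^sub>R y
     + (1 / (1 - (norm p)\<^sup>2)\<^sup>2) *\<^sub>R (hermitian_dot y p *s p)"

lemma bergman_riem_eq_inner: "bergman_riem p x y = inner x (bergman_op p y)"
proof -
  have "Re (hermitian_dot x p * cnj (hermitian_dot y p)) = inner x (hermitian_dot y p *s p)"
    by (simp add: inner_eq_Re_hermitian_dot hermitian_dot_scalar_right mult.commute)
  then show ?thesis
    by (simp add: bergman_riem_eq bergman_op_def inner_add_right)
qed

lemma bergman_riem_commute: "bergman_riem p x y = bergman_riem p y x"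
proof -
  have "Re (hermitian_dot x p * cnj (hermitian_dot y p)) = Re (hermitian_dot y p * cnj (hermitian_dot x p))"
    by (simp add: mult.commute)
  then show ?thesis by (simp add: bergman_riem_eq inner_commute)
qed

lemma linear_bergman_op: "linear (bergman_op p)"
proof (rule linearI)
  show "bergman_op p (x + y) = bergman_op p x + bergman_op p y" for x y
    by (simp add: bergman_op_def hermitian_dot_add_left vector_sadd_rdistrib scaleR_add_right)
  have "(of_real r * hermitian_dot x p) *s p = r *\<^sub>R (hermitian_dot x p *s p)" for r x
    by (simp only: Finite_Cartesian_Product.vec_eq_iff vector_scaleR_component vector_scalar_mult_def
        vec_lambda_beta) (simp add: scaleR_conv_of_real)
  then show "bergman_op p (r *\<^sub>R x) = r *\<^sub>R bergman_op p x" for r x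
    by (simp add: bergman_op_def hermitian_dot_scaleR_left scaleR_add_right)
qed

lemma bounded_bilinear_bergman_riem: "bounded_bilinear (bergman_riem p)"
proof -
  have "bounded_bilinear (\<lambda>x y. inner x (bergman_op p y))"
    using bounded_bilinear.comp[OF bounded_bilinear_inner bounded_linear_ident]
      linear_bergman_op[of p, unfolded linear_conv_bounded_linear]
    by blast
  then show ?thesis by (simp add: bergman_riem_eq_inner[abs_def])
qed

lemma bergman_riem_pos:
  assumes "norm p < 1" and "x \<noteq> 0"
  shows "bergman_riem p x x > 0"
proof -
  have "(norm p)\<^sup>2 < 1" using assms(1) by (simp add: power_less_one_iff abs_square_less_1)
  moreover have "inner x x > 0" using assms(2) by simp
  moreover have "Re (hermitian_dot x p * cnj (hermitian_dot x p)) \<ge> 0" by simp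
  ultimately show ?thesis by (simp add: bergman_riem_eq add_pos_nonneg)
qed

lemma linear_Jcx: "linear Jcx"
  by (rule linearI)
    (simp_all only: Jcx_def Finite_Cartesian_Product.vec_eq_iff vector_add_component
      vector_scaleR_component vec_lambda_beta, simp_all add: algebra_simps scaleR_conv_of_real)

lemma Jcx_Jcx [simp]: "Jcx (Jcx x) = - x"
  by (simp add: Jcx_def Finite_Cartesian_Product.vec_eq_iff)

lemma inj_Jcx: "inj Jcx"
  by (metis Jcx_Jcx injI minus_equation_iff)

lemma bergman_riem_Jcx:
  fixes x y :: "complex^'n"
  shows "bergman_riem p (Jcx x) (Jcx y) = bergman_riem p x y"
proof -
  have "hermitian_dot (Jcx x) z = \<i> * hermitian_dot x z" for x z :: "complex^'n"
    by (simp add: hermitian_dot_def Jcx_def sum_distrib_left mult.assoc)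
  then have "hermitian_dot (Jcx x) p * cnj (hermitian_dot (Jcx y) p)
      = hermitian_dot x p * cnj (hermitian_dot y p)"
    by (simp add: algebra_simps)
  moreover have "hermitian_dot (Jcx x) (Jcx y) = hermitian_dot x y"
    by (simp add: hermitian_dot_def Jcx_def algebra_simps)
  ultimately show ?thesis
    by (simp add: bergman_riem_eq inner_eq_Re_hermitian_dot)
qed

lemma omega_eq_inner: "omega p x v = inner (bergman_op p (Jcx v)) x"
  by (simp add: omega_def bergman_riem_eq_inner inner_commute)

section \<open>Coordinates on a tangent space\<close>

lemma bij_coord_enum: "bij_betw (coord_enum :: nat \<Rightarrow> 'd::finite) {..<CARD('d)} UNIV"
proof -
  have "\<exists>f. bij_betw f {..<CARD('d)} (UNIV :: 'd set)"
    using ex_bij_betw_nat_finite[of "UNIV :: 'd set"] by (auto simp: atLeast0LessThan)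
  then show ?thesis unfolding coord_enum_def by (rule someI_ex)
qed

locale bergman_frame =
  fixes p :: "complex^'n" and L :: "real^'d \<Rightarrow> complex^'n"
  assumes norm_p: "norm p < 1" and linear_L: "linear L" and inj_L: "inj L"
begin

definition frame :: "nat \<Rightarrow> complex^'n" where
  "frame j = L (axis (coord_enum j) 1)"

definition coords :: "real^'d \<Rightarrow> real Matrix.vec" where
  "coords s = Matrix.vec CARD('d) (\<lambda>j. s $ coord_enum j)"

definition point_of_coords :: "real Matrix.vec \<Rightarrow> real^'d" where
  "point_of_coords x = (\<Sum>j<CARD('d). (x $ j) *\<^sub>R axis (coord_enum j) 1)"

definition from_coords :: "real Matrix.vec \<Rightarrow> complex^'n" where
  "from_coords x = (\<Sum>j<CARD('d). (x $ j) *\<^sub>R frame j)"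

lemma coord_enum_eq_iff:
  "j < CARD('d) \<Longrightarrow> k < CARD('d) \<Longrightarrow> (coord_enum j :: 'd) = coord_enum k \<longleftrightarrow> j = k"
  using bij_coord_enum unfolding bij_betw_def inj_on_def by auto

lemma from_coords_eq: "from_coords x = L (point_of_coords x)"
  by (simp add: from_coords_def point_of_coords_def frame_def linear_sum[OF linear_L]
      linear_scale[OF linear_L])

lemma point_of_coords_nth:
  assumes "k < CARD('d)"
  shows "point_of_coords x $ coord_enum k = x $ k"
proof -
  have "point_of_coords x $ coord_enum k = (\<Sum>j<CARD('d). if j = k then x $ k else 0)"
    unfolding point_of_coords_def sum_component
    by (rule sum.cong) (auto simp: axis_def coord_enum_eq_iff assms)
  then show ?thesis using assms by simp
qed

lemma point_of_coords_coords: "point_of_coords (coords s) = s"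
proof -
  have "point_of_coords (coords s) $ i = s $ i" for i
  proof -
    obtain k where "k < CARD('d)" and "coord_enum k = i"
      using bij_coord_enum unfolding bij_betw_def by (metis UNIV_I imageE lessThan_iff)
    then show ?thesis using point_of_coords_nth[of k "coords s"] by (simp add: coords_def)
  qed
  then show ?thesis by (simp add: Finite_Cartesian_Product.vec_eq_iff)
qed

lemma from_coords_coords: "from_coords (coords s) = L s"
  by (simp add: from_coords_eq point_of_coords_coords)

lemma coords_carrier [simp]: "coords s \<in> carrier_vec CARD('d)"
  by (simp add: coords_def)

lemma from_coords_in_range: "from_coords x \<in> range L"
  by (simp add: from_coords_eq)

lemma in_range_imp_from_coords:
  "v \<in> range L \<Longrightarrow> \<exists>x\<in>carrier_vec CARD('d). from_coords x = v"
  using from_coords_coords coords_carrier by blast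

lemma from_coords_eq_0:
  assumes x: "x \<in> carrier_vec CARD('d)" and zero: "from_coords x = 0"
  shows "x = 0\<^sub>v CARD('d)"
proof (rule eq_vecI)
  have "L (point_of_coords x) = L 0"
    using zero by (simp add: from_coords_eq linear_0[OF linear_L])
  then have "point_of_coords x = 0" using inj_L by (simp add: inj_eq)
  then show "x $ k = 0\<^sub>v CARD('d) $ k" if "k < dim_vec (0\<^sub>v CARD('d))" for k
    using point_of_coords_nth[of k x] that by simp
qed (use x in simp)

lemma from_coords_add:
  "x \<in> carrier_vec CARD('d) \<Longrightarrow> y \<in> carrier_vec CARD('d) \<Longrightarrow>
     from_coords (x + y) = from_coords x + from_coords y"
  by (simp add: from_coords_def scaleR_add_left sum.distrib)

lemma from_coords_mult_mat_vec:
  assumes C: "C \<in> carrier_mat CARD('d) CARD('d)" and v: "v \<in> carrier_vec CARD('d)"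
  shows "from_coords (C *\<^sub>v v) = (\<Sum>j<CARD('d). (v $ j) *\<^sub>R from_coords (col C j))"
proof -
  have "from_coords (C *\<^sub>v v) = (\<Sum>i<CARD('d). \<Sum>j<CARD('d). (C $$ (i, j) * v $ j) *\<^sub>R frame i)"
    unfolding from_coords_def using C v
    by (intro sum.cong) (auto simp: scalar_prod_def atLeast0LessThan scaleR_sum_left)
  also have "\<dots> = (\<Sum>j<CARD('d). (v $ j) *\<^sub>R (\<Sum>i<CARD('d). C $$ (i, j) *\<^sub>R frame i))"
    by (subst sum.swap) (simp add: scaleR_sum_right mult.commute)
  also have "\<dots> = (\<Sum>j<CARD('d). (v $ j) *\<^sub>R from_coords (col C j))"
    unfolding from_coords_def using C by (intro sum.cong refl) (auto simp: col_def)
  finally show ?thesis .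
qed

lemma bergman_riem_from_coords_left:
  "bergman_riem p (from_coords x) w = (\<Sum>j<CARD('d). x $ j * bergman_riem p (frame j) w)"
  by (simp add: from_coords_def bounded_bilinear.sum_left[OF bounded_bilinear_bergman_riem]
      bounded_bilinear.scaleR_left[OF bounded_bilinear_bergman_riem])

lemma bergman_riem_from_coords_right:
  "bergman_riem p w (from_coords x) = (\<Sum>j<CARD('d). x $ j * bergman_riem p w (frame j))"
  by (simp add: from_coords_def bounded_bilinear.sum_right[OF bounded_bilinear_bergman_riem]
      bounded_bilinear.scaleR_right[OF bounded_bilinear_bergman_riem])

lemma Jcx_from_coords: "Jcx (from_coords x) = (\<Sum>j<CARD('d). (x $ j) *\<^sub>R Jcx (frame j))"
  by (simp add: from_coords_def linear_sum[OF linear_Jcx] linear_scale[OF linear_Jcx])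

text \<open>Gm, Hm and Wm are the matrices G, H and W of the statement, computed in the frame L e_j;
  for L the derivative of a parametrisation, frame j is the partial derivative in t_j.\<close>

definition Gm :: "real mat" where
  "Gm = mat CARD('d) CARD('d) (\<lambda>(j, k). bergman_riem p (frame j) (frame k))"

definition Hm :: "real mat" where
  "Hm = mat CARD('d) CARD('d) (\<lambda>(j, k). omega p (frame j) (frame k))"

definition Wm :: "real mat" where
  "Wm = the (mat_inverse Gm) * Hm"

lemma Gm_carrier [simp]: "Gm \<in> carrier_mat CARD('d) CARD('d)"
  and Hm_carrier [simp]: "Hm \<in> carrier_mat CARD('d) CARD('d)"
  by (simp_all add: Gm_def Hm_def)

lemma Gm_mult_vec_nth:
  "y \<in> carrier_vec CARD('d) \<Longrightarrow> j < CARD('d) \<Longrightarrow>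
     (Gm *\<^sub>v y) $ j = bergman_riem p (frame j) (from_coords y)"
  by (simp add: Gm_def bergman_riem_from_coords_right scalar_prod_def atLeast0LessThan mult.commute)

lemma Hm_mult_vec_nth:
  "y \<in> carrier_vec CARD('d) \<Longrightarrow> j < CARD('d) \<Longrightarrow>
     (Hm *\<^sub>v y) $ j = bergman_riem p (frame j) (Jcx (from_coords y))"
  by (simp add: Hm_def omega_def Jcx_from_coords scalar_prod_def atLeast0LessThan mult.commute
      bounded_bilinear.sum_right[OF bounded_bilinear_bergman_riem]
      bounded_bilinear.scaleR_right[OF bounded_bilinear_bergman_riem])

lemma bergman_riem_self_eq_0: "bergman_riem p v v = 0 \<Longrightarrow> v = 0"
  using bergman_riem_pos[OF norm_p, of v] by (cases "v = 0") auto

lemma det_Gm_nonzero: "det Gm \<noteq> 0"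
proof
  assume "det Gm = 0"
  then obtain y where y: "y \<in> carrier_vec CARD('d)" "y \<noteq> 0\<^sub>v CARD('d)" "Gm *\<^sub>v y = 0\<^sub>v CARD('d)"
    using det_0_iff_vec_prod_zero_field[OF Gm_carrier] by auto
  have "bergman_riem p (frame j) (from_coords y) = 0" if "j < CARD('d)" for j
    using Gm_mult_vec_nth[OF y(1) that] y(3) that by simp
  then have "bergman_riem p (from_coords y) (from_coords y) = 0"
    by (simp add: bergman_riem_from_coords_left)
  then show False
    using from_coords_eq_0[OF y(1)] y(2) bergman_riem_self_eq_0 by blast
qed

lemma Gm_inverse:
  "the (mat_inverse Gm) \<in> carrier_mat CARD('d) CARD('d)" "Gm * the (mat_inverse Gm) = 1\<^sub>m CARD('d)"
proof -
  have "Gm \<in> Units (ring_mat TYPE(real) CARD('d) ())"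
    by (rule det_non_zero_imp_unit[OF Gm_carrier det_Gm_nonzero])
  then obtain G' where G': "mat_inverse Gm = Some G'"
    using mat_inverse(1)[OF Gm_carrier] by fastforce
  then show "the (mat_inverse Gm) \<in> carrier_mat CARD('d) CARD('d)"
    and "Gm * the (mat_inverse Gm) = 1\<^sub>m CARD('d)"
    using mat_inverse(2)[OF Gm_carrier G'] by auto
qed

lemma Wm_carrier [simp]: "Wm \<in> carrier_mat CARD('d) CARD('d)"
  using Gm_inverse by (simp add: Wm_def)

lemma Gm_mult_Wm: "Gm * Wm = Hm"
  using Gm_inverse assoc_mult_mat[OF Gm_carrier Gm_inverse(1) Hm_carrier]
  by (simp add: Wm_def left_mult_one_mat[OF Hm_carrier] del: assoc_mult_mat)

lemma bergman_riem_from_coords_Wm: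
  assumes x: "x \<in> carrier_vec CARD('d)" and v: "v \<in> range L"
  shows "bergman_riem p v (from_coords (Wm *\<^sub>v x)) = bergman_riem p v (Jcx (from_coords x))"
proof -
  obtain c where c: "c \<in> carrier_vec CARD('d)" "from_coords c = v"
    using in_range_imp_from_coords[OF v] by blast
  have "Gm *\<^sub>v (Wm *\<^sub>v x) = Hm *\<^sub>v x"
    using assoc_mult_mat_vec[OF Gm_carrier Wm_carrier x] by (simp add: Gm_mult_Wm)
  then have "bergman_riem p (frame j) (from_coords (Wm *\<^sub>v x)) = bergman_riem p (frame j) (Jcx (from_coords x))"
    if "j < CARD('d)" for j
    using Gm_mult_vec_nth[OF mult_mat_vec_carrier[OF Wm_carrier x] that] Hm_mult_vec_nth[OF x that]
    by simp
  then show ?thesis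
    unfolding c(2)[symmetric] by (simp add: bergman_riem_from_coords_left)
qed

lemma orthogonal_tangent_eq_0:
  assumes "u \<in> range L" and "\<And>v. v \<in> range L \<Longrightarrow> bergman_riem p v u = 0"
  shows "u = 0"
  using assms bergman_riem_self_eq_0 by blast

lemma Wm_mult_vec_sympl_compl:
  assumes x: "x \<in> carrier_vec CARD('d)" and S: "from_coords x \<in> sympl_compl p (range L)"
  shows "Wm *\<^sub>v x = 0\<^sub>v CARD('d)"
proof -
  have "bergman_riem p v (from_coords (Wm *\<^sub>v x)) = 0" if v: "v \<in> range L" for v
  proof -
    have "bergman_riem p v (Jcx (from_coords x)) = - omega p (from_coords x) v"
      using bergman_riem_Jcx[of p v "Jcx (from_coords x)"]
      by (simp add: omega_def bergman_riem_commute bounded_bilinear.minus_right[OF bounded_bilinear_bergman_riem])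
    also have "omega p (from_coords x) v = 0" using S v unfolding sympl_compl_def by blast
    finally show ?thesis using bergman_riem_from_coords_Wm[OF x v] by simp
  qed
  then have "from_coords (Wm *\<^sub>v x) = 0"
    by (intro orthogonal_tangent_eq_0) (simp_all add: from_coords_in_range)
  then show ?thesis by (rule from_coords_eq_0[OF mult_mat_vec_carrier[OF Wm_carrier x]])
qed

lemma from_coords_Wm_mult_vec:
  assumes x: "x \<in> carrier_vec CARD('d)" and J: "Jcx (from_coords x) \<in> range L"
  shows "from_coords (Wm *\<^sub>v x) = Jcx (from_coords x)"
proof -
  have "from_coords (Wm *\<^sub>v x) - Jcx (from_coords x) \<in> range L"
    using subspace_diff[OF linear_subspace_image[OF linear_L subspace_UNIV] from_coords_in_range J] .
  moreover have "bergman_riem p v (from_coords (Wm *\<^sub>v x) - Jcx (from_coords x)) = 0"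
    if "v \<in> range L" for v
    using bergman_riem_from_coords_Wm[OF x that]
    by (simp add: bounded_bilinear.diff_right[OF bounded_bilinear_bergman_riem])
  ultimately have "from_coords (Wm *\<^sub>v x) - Jcx (from_coords x) = 0"
    by (rule orthogonal_tangent_eq_0)
  then show ?thesis by simp
qed

lemma Wm_Wm_mult_vec:
  assumes x: "x \<in> carrier_vec CARD('d)" and J: "Jcx (from_coords x) \<in> range L"
  shows "Wm *\<^sub>v (Wm *\<^sub>v x) = - x"
proof -
  let ?y = "Wm *\<^sub>v x"
  have y: "?y \<in> carrier_vec CARD('d)" by (rule mult_mat_vec_carrier[OF Wm_carrier x])
  have Ey: "from_coords ?y = Jcx (from_coords x)" by (rule from_coords_Wm_mult_vec[OF x J])
  have "Jcx (from_coords ?y) = - from_coords x" by (simp add: Ey)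
  then have "Jcx (from_coords ?y) \<in> range L"
    using subspace_neg[OF linear_subspace_image[OF linear_L subspace_UNIV] from_coords_in_range] by simp
  then have "from_coords (Wm *\<^sub>v ?y) = - from_coords x"
    using from_coords_Wm_mult_vec[OF y] Ey by simp
  then have "from_coords (Wm *\<^sub>v ?y + x) = 0"
    using from_coords_add[OF mult_mat_vec_carrier[OF Wm_carrier y] x] by simp
  then have "Wm *\<^sub>v ?y + x = 0\<^sub>v CARD('d)"
    by (rule from_coords_eq_0[OF add_carrier_vec[OF mult_mat_vec_carrier[OF Wm_carrier y] x]])
  then show ?thesis
  proof (intro eq_vecI)
    fix i assume "i < dim_vec (- x)"
    then have "(Wm *\<^sub>v ?y + x) $ i = 0" and "i < CARD('d)"
      using \<open>Wm *\<^sub>v ?y + x = 0\<^sub>v CARD('d)\<close> x by auto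
    then show "(Wm *\<^sub>v ?y) $ i = (- x) $ i"
      using x by (simp add: eq_neg_iff_add_eq_0)
  qed (use x in \<open>simp add: carrier_matD[OF Wm_carrier]\<close>)
qed

end

section \<open>Isotropic and co-isotropic tangent spaces\<close>

lemma independent_family_of_enum:
  fixes f :: "nat \<Rightarrow> 'a::real_vector"
  assumes B: "independent B" and f: "bij_betw f {..<n} B"
    and sum: "(\<Sum>j<n. c j *\<^sub>R f j) = 0" and j: "j < n"
  shows "c j = 0"
proof -
  define g where "g = inv_into {..<n} f"
  have "(\<Sum>v\<in>B. c (g v) *\<^sub>R v) = (\<Sum>j<n. c (g (f j)) *\<^sub>R f j)"
    by (rule sum.reindex_bij_betw[OF f, symmetric])
  also have "\<dots> = 0"
    using f sum by (simp add: g_def bij_betw_def)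
  finally have "\<forall>v\<in>B. c (g v) = 0"
    using independentD[OF B bij_betw_finite[THEN iffD1, OF f] order_refl, of "\<lambda>v. c (g v)"] by blast
  moreover have "f j \<in> B" and "g (f j) = j"
    using f j by (auto simp: g_def bij_betw_def)
  ultimately show ?thesis by metis
qed

lemma obtain_independent_family:
  fixes S :: "'a::euclidean_space set"
  assumes "subspace S" and "n \<le> dim S"
  obtains f where "\<And>j. j < n \<Longrightarrow> f j \<in> S"
    and "\<And>c. (\<Sum>j<n. c j *\<^sub>R f j) = 0 \<Longrightarrow> \<forall>j<n. c j = 0"
proof -
  obtain B where B: "B \<subseteq> S" "independent B" "card B = dim S"
    using basis_exists[of S] by metis
  obtain B' where B': "B' \<subseteq> B" "card B' = n" "finite B'"
    using obtain_subset_with_card_n[of n B] assms(2) B(3) by metis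
  obtain f where f: "bij_betw f {..<n} B'"
    using ex_bij_betw_nat_finite[OF B'(3)] B'(2) by (metis atLeast0LessThan)
  show thesis
  proof
    show "f j \<in> S" if "j < n" for j
      using f that B(1) B'(1) by (auto simp: bij_betw_def)
    show "\<forall>j<n. c j = 0" if "(\<Sum>j<n. c j *\<^sub>R f j) = 0" for c
      using independent_family_of_enum[OF independent_mono[OF B(2) B'(1)] f that] by blast
  qed
qed

lemma independent_family_append:
  fixes f g :: "nat \<Rightarrow> 'a::real_vector"
  assumes S: "subspace S" and T: "subspace T" and ST: "S \<inter> T \<subseteq> {0}"
    and f: "\<And>j. j < q \<Longrightarrow> f j \<in> S" and f_indep: "\<And>c. (\<Sum>j<q. c j *\<^sub>R f j) = 0 \<Longrightarrow> \<forall>j<q. c j = 0"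
    and g: "\<And>j. j < r \<Longrightarrow> g j \<in> T" and g_indep: "\<And>c. (\<Sum>j<r. c j *\<^sub>R g j) = 0 \<Longrightarrow> \<forall>j<r. c j = 0"
    and sum: "(\<Sum>j<q + r. c j *\<^sub>R (if j < q then f j else g (j - q))) = 0"
  shows "\<forall>j<q + r. c j = 0"
proof -
  define s where "s = (\<Sum>j<q. c j *\<^sub>R f j)"
  define t where "t = (\<Sum>j<r. c (q + j) *\<^sub>R g j)"
  have "(\<Sum>j\<in>{q..<q + r}. c j *\<^sub>R g (j - q)) = t"
    unfolding t_def by (rule sum.reindex_bij_witness[of _ "\<lambda>j. q + j" "\<lambda>j. j - q"]) auto
  then have "(\<Sum>j<q + r. c j *\<^sub>R (if j < q then f j else g (j - q))) = s + t"
    by (simp add: s_def atLeast0LessThan[symmetric] sum.atLeastLessThan_concat[of 0 q "q + r", symmetric])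
  then have "s = - t" using sum by (simp add: eq_neg_iff_add_eq_0)
  moreover have "s \<in> S" unfolding s_def
    by (intro subspace_sum[OF S] subspace_scale[OF S] f) simp
  moreover have "t \<in> T" unfolding t_def
    by (intro subspace_sum[OF T] subspace_scale[OF T] g) simp
  ultimately have "s = 0" and "t = 0"
    using ST subspace_neg[OF T] by auto
  then show ?thesis
    using f_indep[of c] g_indep[of "\<lambda>j. c (q + j)"] unfolding s_def t_def
    by (metis add_diff_inverse_nat nat_add_left_cancel_less)
qed

context bergman_frame
begin

lemma subspace_tangent: "subspace (range L)"
  by (rule linear_subspace_image[OF linear_L subspace_UNIV])

lemma dim_tangent: "dim (range L) = CARD('d)"
proof -
  have "dim (range L) = dim (UNIV :: (real^'d) set)"
    by (rule dim_image_eq[OF linear_L]) (use inj_L in \<open>auto intro: inj_on_subset\<close>)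
  then show ?thesis by simp
qed

lemma sympl_compl_eq_orthogonal:
  "sympl_compl p (range L) = {y. \<forall>x\<in>(\<lambda>v. bergman_op p (Jcx v)) ` range L. real_inner_class.orthogonal x y}"
  unfolding sympl_compl_def real_inner_class.orthogonal_def by (auto simp: omega_eq_inner)

lemma subspace_sympl_compl: "subspace (sympl_compl p (range L))"
  unfolding sympl_compl_eq_orthogonal real_inner_class.orthogonal_def
  by (auto simp: subspace_def inner_add_right)

lemma dim_sympl_compl: "dim (sympl_compl p (range L)) + CARD('d) = 2 * CARD('n)"
proof -
  let ?A = "(\<lambda>v. bergman_op p (Jcx v)) ` range L"
  have lin: "linear (\<lambda>v. bergman_op p (Jcx v))"
    using linear_compose[OF linear_Jcx linear_bergman_op] by (simp add: o_def)
  have "bergman_op p (Jcx v) = 0 \<Longrightarrow> v = 0" for v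
    using bergman_riem_self_eq_0[of "Jcx v"] linear_0[OF linear_Jcx] inj_Jcx
    by (metis bergman_riem_eq_inner inner_zero_right injD)
  then have "inj (\<lambda>v. bergman_op p (Jcx v))"
    using linear_inj_iff_eq_0[OF lin] by blast
  then have "dim ?A = dim (range L)"
    by (intro dim_image_eq[OF lin]) (auto intro: inj_on_subset)
  moreover have "dim {y \<in> UNIV. \<forall>x\<in>?A. real_inner_class.orthogonal x y} + dim ?A = dim (UNIV :: (complex^'n) set)"
    by (rule dim_subspace_orthogonal_to_vectors[OF linear_subspace_image[OF lin subspace_tangent]
          subspace_UNIV]) simp
  ultimately show ?thesis by (simp add: sympl_compl_eq_orthogonal dim_tangent)
qed

lemma dim_tangent_inter_Jcx: "2 * CARD('d) \<le> dim (range L \<inter> Jcx ` range L) + 2 * CARD('n)"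
proof -
  have subspace_J: "subspace (Jcx ` range L)"
    by (rule linear_subspace_image[OF linear_Jcx subspace_tangent])
  have "dim (Jcx ` range L) = dim (range L)"
    by (rule dim_image_eq[OF linear_Jcx]) (use inj_Jcx in \<open>auto intro: inj_on_subset\<close>)
  moreover have "dim {x + y |x y. x \<in> range L \<and> y \<in> Jcx ` range L} + dim (range L \<inter> Jcx ` range L)
      = dim (range L) + dim (Jcx ` range L)"
    by (rule dim_sums_Int[OF subspace_tangent subspace_J])
  moreover have "dim {x + y |x y. x \<in> range L \<and> y \<in> Jcx ` range L} \<le> 2 * CARD('n)"
    using dim_subset_UNIV[of "{x + y |x y. x \<in> range L \<and> y \<in> Jcx ` range L}"] by simp
  ultimately show ?thesis using dim_tangent by linarith
qed

lemma sympl_compl_inter_Jcx: "sympl_compl p (range L) \<inter> Jcx ` range L \<subseteq> {0}"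
proof
  fix x assume "x \<in> sympl_compl p (range L) \<inter> Jcx ` range L"
  then obtain v where "v \<in> range L" "x = Jcx v" "omega p x v = 0"
    unfolding sympl_compl_def by blast
  then show "x \<in> {0}"
    using bergman_riem_self_eq_0 by (simp add: omega_def)
qed

lemma det_O_mat_Wm_isotropic:
  assumes iso: "\<And>x y. x \<in> range L \<Longrightarrow> y \<in> range L \<Longrightarrow> omega p x y = 0" and m: "m \<ge> 1"
  shows "det (O_mat m Wm) = of_nat m ^ CARD('d)"
proof -
  have "Hm = 0\<^sub>m CARD('d) CARD('d)"
    by (rule eq_matI) (auto simp: Hm_def frame_def iso)
  then have "Wm = 0\<^sub>m CARD('d) CARD('d)"
    using Gm_inverse(1) by (simp add: Wm_def)
  moreover have "- (1\<^sub>m CARD('d) * mat_diag CARD('d) (\<lambda>_. 0)) = (0\<^sub>m CARD('d) CARD('d) :: real mat)"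
    by (rule eq_matI) (auto simp: mat_diag_def)
  ultimately show ?thesis
    using det_O_mat_of_square_similar_diag[OF Wm_carrier one_carrier_mat _ _ _ m, of "\<lambda>_. 0"]
    by simp
qed

lemma coisotropic_card_le:
  assumes co: "sympl_compl p (range L) \<subseteq> range L"
  shows "CARD('n) \<le> CARD('d)"
  using dim_subset[OF co] dim_sympl_compl dim_tangent by linarith

lemma card_le_twice: "CARD('d) \<le> 2 * CARD('n)"
  using dim_sympl_compl by linarith

text \<open>The symplectic complement has dimension 2n - d and meets J V only in 0, while
  dim (V \<inter> J V) \<ge> 2d - 2n; so a basis of it extends to one of V by vectors of V \<inter> J V.\<close>

lemma coisotropic_adapted_family:
  assumes co: "sympl_compl p (range L) \<subseteq> range L"
  obtains w where "\<And>j. j < 2 * CARD('n) - CARD('d) \<Longrightarrow> w j \<in> sympl_compl p (range L)"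
    and "\<And>j. 2 * CARD('n) - CARD('d) \<le> j \<Longrightarrow> j < CARD('d) \<Longrightarrow> w j \<in> range L \<inter> Jcx ` range L"
    and "\<And>c. (\<Sum>j<CARD('d). c j *\<^sub>R w j) = 0 \<Longrightarrow> \<forall>j<CARD('d). c j = 0"
proof -
  define q where "q = 2 * CARD('n) - CARD('d)"
  have q: "q = dim (sympl_compl p (range L))" "q \<le> CARD('d)"
    using dim_sympl_compl coisotropic_card_le[OF co] by (simp_all add: q_def)
  have subspace_inter: "subspace (range L \<inter> Jcx ` range L)"
    by (intro subspace_inter subspace_tangent linear_subspace_image[OF linear_Jcx subspace_tangent])
  obtain f where f: "\<And>j. j < q \<Longrightarrow> f j \<in> sympl_compl p (range L)"
    and f_indep: "\<And>c. (\<Sum>j<q. c j *\<^sub>R f j) = 0 \<Longrightarrow> \<forall>j<q. c j = 0"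
    using obtain_independent_family[OF subspace_sympl_compl] q(1) by blast
  have "CARD('d) - q \<le> dim (range L \<inter> Jcx ` range L)"
    using dim_tangent_inter_Jcx dim_sympl_compl q(1) by linarith
  then obtain g where g: "\<And>j. j < CARD('d) - q \<Longrightarrow> g j \<in> range L \<inter> Jcx ` range L"
    and g_indep: "\<And>c. (\<Sum>j<CARD('d) - q. c j *\<^sub>R g j) = 0 \<Longrightarrow> \<forall>j<CARD('d) - q. c j = 0"
    using obtain_independent_family[OF subspace_inter] by blast
  have disjoint: "sympl_compl p (range L) \<inter> (range L \<inter> Jcx ` range L) \<subseteq> {0}"
    using sympl_compl_inter_Jcx by blast
  show thesis
  proof
    show "(\<lambda>j. if j < q then f j else g (j - q)) j \<in> sympl_compl p (range L)"
      if "j < 2 * CARD('n) - CARD('d)" for j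
      using f that by (simp add: q_def)
    show "(\<lambda>j. if j < q then f j else g (j - q)) j \<in> range L \<inter> Jcx ` range L"
      if "2 * CARD('n) - CARD('d) \<le> j" "j < CARD('d)" for j
      using g that by (simp add: q_def)
    show "\<forall>j<CARD('d). c j = 0" if "(\<Sum>j<CARD('d). c j *\<^sub>R (if j < q then f j else g (j - q))) = 0" for c
      using independent_family_append[OF subspace_sympl_compl subspace_inter disjoint f f_indep g g_indep,
          where c = c] that q(2) by simp
  qed
qed

definition coords_mat :: "(nat \<Rightarrow> complex^'n) \<Rightarrow> real mat" where
  "coords_mat w = mat CARD('d) CARD('d) (\<lambda>(i, j). coords (inv_into UNIV L (w j)) $ i)"

lemma coords_mat_carrier [simp]: "coords_mat w \<in> carrier_mat CARD('d) CARD('d)"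
  by (simp add: coords_mat_def)

lemma col_coords_mat:
  assumes "j < CARD('d)" and "w j \<in> range L"
  shows "col (coords_mat w) j \<in> carrier_vec CARD('d)" and "from_coords (col (coords_mat w) j) = w j"
proof -
  have "col (coords_mat w) j = coords (inv_into UNIV L (w j))"
    using assms(1) by (intro eq_vecI) (auto simp: coords_mat_def coords_def)
  then show "col (coords_mat w) j \<in> carrier_vec CARD('d)" "from_coords (col (coords_mat w) j) = w j"
    using assms(2) by (simp_all add: from_coords_coords f_inv_into_f)
qed

lemma det_coords_mat_nonzero:
  assumes w: "\<And>j. j < CARD('d) \<Longrightarrow> w j \<in> range L"
    and indep: "\<And>c. (\<Sum>j<CARD('d). c j *\<^sub>R w j) = 0 \<Longrightarrow> \<forall>j<CARD('d). c j = 0"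
  shows "det (coords_mat w) \<noteq> 0"
proof
  assume "det (coords_mat w) = 0"
  then obtain v where v: "v \<in> carrier_vec CARD('d)" "v \<noteq> 0\<^sub>v CARD('d)" "coords_mat w *\<^sub>v v = 0\<^sub>v CARD('d)"
    using det_0_iff_vec_prod_zero_field[OF coords_mat_carrier] by auto
  have "(\<Sum>j<CARD('d). (v $ j) *\<^sub>R w j) = from_coords (coords_mat w *\<^sub>v v)"
    by (simp add: from_coords_mult_mat_vec[OF coords_mat_carrier v(1)] col_coords_mat w)
  also have "\<dots> = 0" using v(3) by (simp add: from_coords_def)
  finally have "\<forall>j<CARD('d). v $ j = 0" by (rule indep)
  then show False using v(1,2) by (auto simp: vec_eq_iff)
qed

lemma Wm_Wm_mult_coords_mat:
  assumes w: "\<And>j. j < CARD('d) \<Longrightarrow> w j \<in> range L"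
    and w1: "\<And>j. j < q \<Longrightarrow> w j \<in> sympl_compl p (range L)"
    and w2: "\<And>j. q \<le> j \<Longrightarrow> j < CARD('d) \<Longrightarrow> w j \<in> range L \<inter> Jcx ` range L"
  shows "Wm * Wm * coords_mat w = - (coords_mat w * mat_diag CARD('d) (\<lambda>j. if j < q then 0 else 1))"
proof -
  define C where "C = coords_mat w"
  have col_C: "col C j \<in> carrier_vec CARD('d)" "from_coords (col C j) = w j" if "j < CARD('d)" for j
    using col_coords_mat[of j w] that w[OF that] by (simp_all add: C_def)
  define \<delta> :: "nat \<Rightarrow> real" where "\<delta> j = (if j < q then 0 else 1)" for j
  have "Wm * Wm * C = - (C * mat_diag CARD('d) \<delta>)"
  proof (rule eq_matI)
    fix i j assume "i < dim_row (- (C * mat_diag CARD('d) \<delta>))" "j < dim_col (- (C * mat_diag CARD('d) \<delta>))"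
    then have i: "i < CARD('d)" and j: "j < CARD('d)"
      by (simp_all add: C_def mat_diag_def carrier_matD[OF coords_mat_carrier])
    have "(Wm * Wm * C) $$ (i, j) = (Wm *\<^sub>v col (Wm * C) j) $ i"
      using i j by (simp add: C_def assoc_mult_mat[OF Wm_carrier Wm_carrier coords_mat_carrier]
          carrier_matD[OF Wm_carrier] carrier_matD[OF coords_mat_carrier])
    also have "\<dots> = (Wm *\<^sub>v (Wm *\<^sub>v col C j)) $ i"
      unfolding C_def using col_mult2[OF Wm_carrier coords_mat_carrier j] by simp
    also have "\<dots> = - (C $$ (i, j) * \<delta> j)"
    proof (cases "j < q")
      case True
      then show ?thesis
        using Wm_mult_vec_sympl_compl[OF col_C(1)[OF j]] w1 col_C(2)[OF j] i
        by (simp add: \<delta>_def carrier_matD[OF Wm_carrier])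
    next
      case False
      then have "w j \<in> Jcx ` range L" using w2 j by simp
      then have "Jcx (from_coords (col C j)) \<in> range L"
        using col_C(2)[OF j] subspace_neg[OF subspace_tangent] by auto
      then show ?thesis
        using Wm_Wm_mult_vec[OF col_C(1)[OF j]] False i j
        by (simp add: \<delta>_def C_def carrier_matD[OF coords_mat_carrier])
    qed
    also have "\<dots> = (- (C * mat_diag CARD('d) \<delta>)) $$ (i, j)"
      using i j by (simp add: C_def mat_diag_mult_right[OF coords_mat_carrier])
    finally show "(Wm * Wm * C) $$ (i, j) = (- (C * mat_diag CARD('d) \<delta>)) $$ (i, j)" .
  qed (simp_all add: C_def mat_diag_def carrier_matD[OF Wm_carrier] carrier_matD[OF coords_mat_carrier])
  then show ?thesis
    by (simp only: C_def \<delta>_def[abs_def])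
qed

lemma det_O_mat_Wm_coisotropic:
  assumes co: "sympl_compl p (range L) \<subseteq> range L" and m: "m \<ge> 1"
  shows "det (O_mat m Wm)
    = 2 ^ ((m - 1) * (2 * CARD('d) - 2 * CARD('n))) * of_nat m ^ (2 * CARD('n) - CARD('d))"
proof -
  define q where "q = 2 * CARD('n) - CARD('d)"
  obtain w where w1: "\<And>j. j < q \<Longrightarrow> w j \<in> sympl_compl p (range L)"
    and w2: "\<And>j. q \<le> j \<Longrightarrow> j < CARD('d) \<Longrightarrow> w j \<in> range L \<inter> Jcx ` range L"
    and indep: "\<And>c. (\<Sum>j<CARD('d). c j *\<^sub>R w j) = 0 \<Longrightarrow> \<forall>j<CARD('d). c j = 0"
    using coisotropic_adapted_family[OF co] unfolding q_def by blast
  have w: "w j \<in> range L" if "j < CARD('d)" for j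
    using w1 w2 co that by (cases "j < q") auto
  define \<delta> :: "nat \<Rightarrow> real" where "\<delta> j = (if j < q then 0 else 1)" for j
  have "Wm * Wm * coords_mat w = - (coords_mat w * mat_diag CARD('d) \<delta>)"
    using Wm_Wm_mult_coords_mat[OF w w1 w2] by (simp only: \<delta>_def[abs_def])
  moreover have "{j. j < CARD('d) \<and> \<delta> j = 1} = {q..<CARD('d)}"
    and "{j. j < CARD('d) \<and> \<delta> j \<noteq> 1} = {..<q}"
    using coisotropic_card_le[OF co] by (auto simp: \<delta>_def q_def)
  moreover have "CARD('d) - q = 2 * CARD('d) - 2 * CARD('n)"
    using card_le_twice by (simp add: q_def)
  ultimately show ?thesis
    using det_O_mat_of_square_similar_diag[OF Wm_carrier coords_mat_carrier
        det_coords_mat_nonzero[OF w indep] _ _ m, where \<delta> = \<delta>]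
    by (simp add: \<delta>_def q_def)
qed

end

section \<open>Tangent spaces of an embedded submanifold\<close>

lemma has_derivative_inverse_within_remainder:
  fixes f :: "'a::real_normed_vector \<Rightarrow> 'b::real_normed_vector"
  assumes derf: "(f has_derivative f') (at (g y))"
    and lin: "bounded_linear g'" and inv: "g' \<circ> f' = id"
    and contg: "continuous (at y within S) g"
    and fg: "\<And>z. z \<in> S \<Longrightarrow> f (g z) = z" and y: "y \<in> S"
    and e: "e > 0"
  shows "\<forall>\<^sub>F z in at y within S. norm (g z - g y - g' (z - y)) \<le> e * norm (g z - g y)"
proof -
  interpret f': bounded_linear f' using derf by (rule has_derivative_bounded_linear)
  interpret g': bounded_linear g' by (rule lin)
  obtain C where C: "C > 0" "\<And>u. norm (g' u) \<le> norm u * C"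
    using g'.pos_bounded by blast
  have in_S: "\<forall>\<^sub>F z in at y within S. z \<in> S"
    by (simp add: eventually_at_filter)
  have g_tendsto: "filterlim g (nhds (g y)) (at y within S)"
    using contg by (simp add: continuous_within)
  have "e / C > 0" using e C(1) by simp
  then have "\<forall>\<^sub>F u in at (g y). norm (f u - f (g y) - f' (u - g y)) \<le> e / C * norm (u - g y)"
    using derf unfolding has_derivative_within_alt2 by blast
  then have "\<forall>\<^sub>F u in nhds (g y). norm (f u - f (g y) - f' (u - g y)) \<le> e / C * norm (u - g y)"
    by (simp add: eventually_nhds_conv_at)
  then have "\<forall>\<^sub>F z in at y within S.
      norm (f (g z) - f (g y) - f' (g z - g y)) \<le> e / C * norm (g z - g y)"
    by (rule eventually_compose_filterlim[OF _ g_tendsto])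
  with in_S show ?thesis
  proof eventually_elim
    case (elim z)
    have "g z - g y - g' (z - y) = - g' (f (g z) - f (g y) - f' (g z - g y))"
      using inv fg[OF elim(1)] fg[OF y] by (simp add: g'.diff pointfree_idE)
    then have "norm (g z - g y - g' (z - y)) \<le> norm (f (g z) - f (g y) - f' (g z - g y)) * C"
      using C(2) by simp
    also have "\<dots> \<le> e / C * norm (g z - g y) * C"
      by (rule mult_right_mono[OF elim(2)]) (use C(1) in simp)
    finally show ?case using C(1) by simp
  qed
qed

lemma has_derivative_inverse_within:
  fixes f :: "'a::real_normed_vector \<Rightarrow> 'b::real_normed_vector"
  assumes derf: "(f has_derivative f') (at (g y))"
    and lin: "bounded_linear g'" and inv: "g' \<circ> f' = id"
    and contg: "continuous (at y within S) g"
    and fg: "\<And>z. z \<in> S \<Longrightarrow> f (g z) = z" and y: "y \<in> S"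
  shows "(g has_derivative g') (at y within S)"
proof -
  interpret g': bounded_linear g' by (rule lin)
  obtain C where C: "C > 0" "\<And>u. norm (g' u) \<le> norm u * C"
    using g'.pos_bounded by blast
  have key: "\<forall>\<^sub>F z in at y within S. norm (g z - g y - g' (z - y)) \<le> e * norm (g z - g y)"
    if "e > 0" for e
    by (rule has_derivative_inverse_within_remainder[OF derf lin inv contg _ y that]) (rule fg)
  have "\<forall>\<^sub>F z in at y within S. norm (g z - g y - g' (z - y)) \<le> 1 / 2 * norm (g z - g y)"
    by (rule key) simp
  then have lipschitz: "\<forall>\<^sub>F z in at y within S. norm (g z - g y) \<le> 2 * C * norm (z - y)"
  proof eventually_elim
    case (elim z)
    have "norm (g z - g y) \<le> norm (g' (z - y)) + norm (g z - g y - g' (z - y))"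
      by (rule norm_triangle_sub)
    then show ?case using elim C(2)[of "z - y"] by (simp add: algebra_simps)
  qed
  show ?thesis
    unfolding has_derivative_within_alt2
  proof (intro conjI lin allI impI)
    fix e :: real assume "e > 0"
    with C(1) have "e / (2 * C) > 0" by simp
    from key[OF this] lipschitz
    show "\<forall>\<^sub>F z in at y within S. norm (g z - g y - g' (z - y)) \<le> e * norm (z - y)"
    proof eventually_elim
      case (elim z)
      have "e / (2 * C) * norm (g z - g y) \<le> e / (2 * C) * (2 * C * norm (z - y))"
        using elim(2) \<open>e > 0\<close> C(1) by (intro mult_left_mono) simp_all
      then show ?case using elim(1) C(1) by simp
    qed
  qed
qed

lemma local_param_inverse_has_derivative:
  assumes "local_param \<Gamma> U \<gamma>" and t: "t \<in> ball 0 1"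
    and H: "homeomorphism (ball 0 1) (\<Gamma> \<inter> U) \<gamma> g"
    and P: "linear P" "P \<circ> frechet_derivative \<gamma> (at t) = id"
  shows "(g has_derivative P) (at (\<gamma> t) within \<Gamma> \<inter> U)"
proof -
  have p: "\<gamma> t \<in> \<Gamma> \<inter> U" and g_p: "g (\<gamma> t) = t"
    and inverse: "\<And>z. z \<in> \<Gamma> \<inter> U \<Longrightarrow> \<gamma> (g z) = z"
    using H t unfolding homeomorphism_def by blast+
  have "\<gamma> differentiable (at t)"
    using assms(1) t unfolding local_param_def by blast
  then have "(\<gamma> has_derivative frechet_derivative \<gamma> (at t)) (at (g (\<gamma> t)))"
    by (simp add: g_p frechet_derivative_works)
  moreover have "continuous (at (\<gamma> t) within \<Gamma> \<inter> U) g"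
    using H p unfolding homeomorphism_def by (simp add: continuous_on_eq_continuous_within)
  ultimately show ?thesis
    using has_derivative_inverse_within[OF _ _ P(2) _ inverse p] P(1)
    by (simp add: linear_conv_bounded_linear)
qed

text \<open>With g1 the inverse of gamma1, the map g1 o gamma2 is differentiable at t2 and
  gamma1 o g1 o gamma2 = gamma2 near t2, so the derivative of gamma2 factors through that of gamma1.\<close>

lemma range_derivative_subset_of_local_params:
  fixes \<gamma>1 \<gamma>2 :: "real^'d \<Rightarrow> complex^'n"
  assumes P1: "local_param \<Gamma> U1 \<gamma>1" and t1: "t1 \<in> ball 0 1"
    and P2: "local_param \<Gamma> U2 \<gamma>2" and t2: "t2 \<in> ball 0 1"
    and same_point: "\<gamma>2 t2 = \<gamma>1 t1"
  shows "range (frechet_derivative \<gamma>2 (at t2)) \<subseteq> range (frechet_derivative \<gamma>1 (at t1))"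
proof -
  define L1 where "L1 = frechet_derivative \<gamma>1 (at t1)"
  define L2 where "L2 = frechet_derivative \<gamma>2 (at t2)"
  from P1 obtain g1 where U1: "open U1" and H1: "homeomorphism (ball 0 1) (\<Gamma> \<inter> U1) \<gamma>1 g1"
    and D1: "(\<gamma>1 has_derivative L1) (at t1)" and I1: "inj L1"
    using t1 unfolding local_param_def L1_def by (metis frechet_derivative_works)
  from P2 have H2: "\<exists>g2. homeomorphism (ball 0 1) (\<Gamma> \<inter> U2) \<gamma>2 g2"
    and D2: "(\<gamma>2 has_derivative L2) (at t2)"
    using t2 unfolding local_param_def L2_def by (metis frechet_derivative_works)+
  obtain P where P: "linear P" "P \<circ> L1 = id"
    using linear_injective_left_inverse[OF has_derivative_linear[OF D1] I1] by blast
  have p: "\<gamma>1 t1 \<in> \<Gamma> \<inter> U1" and g1_p: "g1 (\<gamma>1 t1) = t1"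
    using H1 t1 unfolding homeomorphism_def by blast+
  have dg1: "(g1 has_derivative P) (at (\<gamma>1 t1) within \<Gamma> \<inter> U1)"
    using local_param_inverse_has_derivative[OF P1 t1 H1] P unfolding L1_def by blast
  define N where "N = ball 0 1 \<inter> \<gamma>2 -` U1"
  have N: "open N" "t2 \<in> N" "\<gamma>2 ` N \<subseteq> \<Gamma> \<inter> U1"
    using H2 U1 t2 p same_point unfolding N_def homeomorphism_def
    by (auto intro!: continuous_open_preimage)
  have "((\<gamma>1 \<circ> (g1 \<circ> \<gamma>2)) has_derivative L1 \<circ> (P \<circ> L2)) (at t2 within N)"
  proof (rule diff_chain_within)
    show "((g1 \<circ> \<gamma>2) has_derivative P \<circ> L2) (at t2 within N)"
      by (rule diff_chain_within[OF has_derivative_at_withinI[OF D2]])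
        (use dg1 N(3) same_point in \<open>auto intro: has_derivative_subset\<close>)
    show "(\<gamma>1 has_derivative L1) (at ((g1 \<circ> \<gamma>2) t2) within (g1 \<circ> \<gamma>2) ` N)"
      using D1 g1_p same_point by (simp add: has_derivative_at_withinI)
  qed
  moreover have "(\<gamma>1 \<circ> (g1 \<circ> \<gamma>2)) z = \<gamma>2 z" if "z \<in> N" for z
  proof -
    have "\<gamma>2 z \<in> \<Gamma> \<inter> U1" using N(3) that by blast
    then show ?thesis using H1 unfolding homeomorphism_def by simp
  qed
  ultimately have "(\<gamma>2 has_derivative L1 \<circ> (P \<circ> L2)) (at t2 within N)"
    by (rule has_derivative_transform_within_open[OF _ N(1,2)])
  then have "(\<gamma>2 has_derivative L1 \<circ> (P \<circ> L2)) (at t2)"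
    by (simp add: at_within_open[OF N(2,1)])
  then have "L2 = L1 \<circ> (P \<circ> L2)"
    by (rule has_derivative_unique[OF D2])
  then have "L2 w \<in> range L1" for w
    by (metis comp_apply rangeI)
  then show ?thesis
    unfolding L1_def[symmetric] L2_def[symmetric] by blast
qed

lemma tangent_image_eq_range_derivative:
  fixes \<gamma> :: "real^'d \<Rightarrow> complex^'n"
  assumes P: "local_param \<Gamma> U \<gamma>" and t: "t \<in> ball 0 1"
  shows "tangent_image TYPE('d) \<Gamma> (\<gamma> t) = range (frechet_derivative \<gamma> (at t))"
  using range_derivative_subset_of_local_params[OF P t] P t
  unfolding tangent_image_def by blast

lemma csqrt_two_power_mult_power:
  assumes "m > 0"
  shows "csqrt (2 ^ a * of_nat m ^ b) = complex_of_real (2 powr (real a / 2) * real m powr (real b / 2))"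
proof -
  have "csqrt (2 ^ a * of_nat m ^ b) = csqrt (complex_of_real (2 ^ a * real m ^ b))"
    by simp
  also have "\<dots> = complex_of_real (sqrt (2 ^ a * real m ^ b))"
    by (rule csqrt_of_real) simp
  also have "sqrt (2 ^ a * real m ^ b) = 2 powr (real a / 2) * real m powr (real b / 2)"
    using assms by (simp add: real_sqrt_mult powr_half_sqrt_powr powr_realpow)
  finally show ?thesis .
qed

lemma csqrt_coisotropic_value:
  fixes m n d :: nat
  assumes "n \<le> d" and "d \<le> 2 * n" and "m \<ge> 1"
  shows "csqrt (2 ^ ((m - 1) * (2 * d - 2 * n)) * of_nat m ^ (2 * n - d))
    = complex_of_real (2 powr ((real d - real n) * (real m - 1)) * real m powr (real n - real d / 2))"
proof -
  have a: "real ((m - 1) * (2 * d - 2 * n)) = (real m - 1) * (2 * real d - 2 * real n)"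
    using assms(1,3) by (simp add: of_nat_diff)
  have b: "real (2 * n - d) = 2 * real n - real d"
    using assms(2) by (simp add: of_nat_diff)
  have e1: "real ((m - 1) * (2 * d - 2 * n)) / 2 = (real d - real n) * (real m - 1)"
    unfolding a by (simp add: field_simps)
  have e2: "real (2 * n - d) / 2 = real n - real d / 2"
    unfolding b by simp
  have "m > 0" using assms(3) by simp
  show ?thesis
    unfolding csqrt_two_power_mult_power[OF \<open>m > 0\<close>] e1 e2 ..
qed

lemma bergman_frame_of_local_param:
  fixes \<gamma> :: "real^'d \<Rightarrow> complex^'n"
  assumes "embedded_submanifold TYPE('d) \<Gamma>" and "local_param \<Gamma> U \<gamma>" and "t \<in> ball 0 1"
  shows "\<gamma> t \<in> \<Gamma>" and "bergman_frame (\<gamma> t) (frechet_derivative \<gamma> (at t))"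
proof -
  show "\<gamma> t \<in> \<Gamma>"
    using assms(2,3) unfolding local_param_def homeomorphism_def by blast
  then have "norm (\<gamma> t) < 1"
    using assms(1) unfolding embedded_submanifold_def by auto
  moreover have "\<gamma> differentiable (at t)" and "inj (frechet_derivative \<gamma> (at t))"
    using assms(2,3) unfolding local_param_def by blast+
  moreover from this(1) have "linear (frechet_derivative \<gamma> (at t))"
    by (rule has_derivative_linear[OF iffD1[OF frechet_derivative_works]])
  ultimately show "bergman_frame (\<gamma> t) (frechet_derivative \<gamma> (at t))"
    by (auto intro: bergman_frame.intro)
qed

theorem mainTheorem19:
  fixes \<Gamma> :: "(complex^'n) set" and U :: "(complex^'n) set"
    and \<gamma> :: "real^'d \<Rightarrow> complex^'n" and t :: "real^'d" and m :: nat
  assumes "embedded_submanifold TYPE('d) \<Gamma>"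
    and "isotropic TYPE('d) \<Gamma> \<or> coisotropic TYPE('d) \<Gamma>"
    and "local_param \<Gamma> U \<gamma>" and "t \<in> ball 0 1"
    and "m \<ge> 2"
  shows "(isotropic TYPE('d) \<Gamma> \<longrightarrow>
            csqrt (det (O_mat m (W_mat \<gamma> t))) =
              complex_of_real (real m powr (real CARD('d) / 2)))
       \<and> (coisotropic TYPE('d) \<Gamma> \<longrightarrow>
            csqrt (det (O_mat m (W_mat \<gamma> t))) =
              complex_of_real (2 powr ((real CARD('d) - real CARD('n)) * (real m - 1))
                * real m powr (real CARD('n) - real CARD('d) / 2)))"
proof -
  define L where "L = frechet_derivative \<gamma> (at t)"
  note point = bergman_frame_of_local_param(1)[OF assms(1,3,4)]
  interpret bergman_frame "\<gamma> t" L
    unfolding L_def by (rule bergman_frame_of_local_param(2)[OF assms(1,3,4)])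
  have W: "W_mat \<gamma> t = Wm"
    unfolding Wm_def Gm_def Hm_def frame_def
    by (simp add: W_mat_def G_mat_def H_mat_def partial_t_def L_def)
  have V: "tangent_image TYPE('d) \<Gamma> (\<gamma> t) = range L"
    unfolding L_def by (rule tangent_image_eq_range_derivative[OF assms(3,4)])
  have m: "m \<ge> 1" using assms(5) by simp
  show ?thesis
  proof (intro conjI impI)
    assume "isotropic TYPE('d) \<Gamma>"
    then have "omega (\<gamma> t) x y = 0" if "x \<in> range L" "y \<in> range L" for x y
      using point V that unfolding isotropic_def sympl_compl_def by blast
    then show "csqrt (det (O_mat m (W_mat \<gamma> t))) = complex_of_real (real m powr (real CARD('d) / 2))"
      using det_O_mat_Wm_isotropic[OF _ m] csqrt_two_power_mult_power[of m 0 "CARD('d)"] m W by simp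
  next
    assume "coisotropic TYPE('d) \<Gamma>"
    then have co: "sympl_compl (\<gamma> t) (range L) \<subseteq> range L"
      using point V unfolding coisotropic_def by metis
    show "csqrt (det (O_mat m (W_mat \<gamma> t))) = complex_of_real (2 powr ((real CARD('d) - real CARD('n)) * (real m - 1))
                * real m powr (real CARD('n) - real CARD('d) / 2))"
      using det_O_mat_Wm_coisotropic[OF co m] csqrt_coisotropic_value[OF coisotropic_card_le[OF co] card_le_twice m] W
      by simp
  qed
qed

end
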